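(* Let $F$ be a non-Archimedean local field with $\mathrm{char}(F)\neq 2$ and $K$ an étale $F$-algebra of degree $2$. Let $L'_K=\mathcal{O}_K$ viewed as a lattice in the quadratic space $V'_K$. (a) $\mathrm{sn}_F(\mathrm{O}(L'_K))=\mathrm{sn}_F(\mathrm{SO}(L'_K))$, and this group equals $\mathrm{N}_{K/F}(K^\times)\bmod (F^\times)^2$ if $K$ is a field, and $\mathcal{O}_F^\times\bmod (F^\times)^2$ if $K=F\times F$. (b) If $F=\mathbb{Q}_p$ for a prime $p$, then the natural homomorphism $\mathrm{SO}(L'_K)\to \mathrm{O}(D_{L'_K})$ is surjective.
   Context: An étale $F$-algebra of degree $2$ is a quadratic field extension of $F$ or $F\times F$; $\alpha'$ denotes the conjugate of $\alpha\in K$ and $\mathrm{N}_{K/F}(\alpha)=\alpha\alpha'$. $\mathcal{O}_K$ is the ring of integers of $K$, and $\mathcal{O}_K=\mathcal{O}_F\times\mathcal{O}_F$ if $K=F\times F$. $V'_K$ is the quadratic $F$-space with underlying space $K$ and quadratic form $\mathrm{N}_{K/F}$. For a quadratic space $(V,q)$ with bilinear form $\langle v,v\rangle=2q(v)$, the spinor norm $\mathrm{sn}_F\colon\mathrm{O}(V)\to F^\times/(F^\times)^2$ is the unique homomorphism sending the reflection $\tau_a(v)=v-2\frac{\langle a,v\rangle}{\langle a,a\rangle}a$ ($q(a)\neq0$) to $q(a)$ mod squares. For an even lattice $L$ ($q(L)\subseteq\mathcal{O}_F$), $\mathrm{O}(L)$, $\mathrm{SO}(L)$ are the elements of $\mathrm{O}(V)$,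 $\mathrm{SO}(V)$ preserving $L$; the dual lattice is $L^\sharp=\{v:\langle v,L\rangle\subseteq\mathcal{O}_F\}$, the discriminant module is $D_L=L^\sharp/L$ with induced quadratic map $D_L\to F/\mathcal{O}_F$, $\mathrm{O}(D_L)$ is its group of $\mathcal{O}_F$-linear automorphisms preserving this quadratic map, and $\mathrm{O}(L)\to\mathrm{O}(D_L)$ is induced by the action on $L^\sharp$. *)

theory Defs
  imports Main "HOL-Library.Product_Plus" "HOL-Computational_Algebra.Primes"
begin

text \<open>The valuation v is only meaningful on nonzero elements.\<close>

definition discrete_valuation :: "('a::field \<Rightarrow> int) \<Rightarrow> bool" where
  "discrete_valuation v \<longleftrightarrow>
     (\<forall>x y. x \<noteq> 0 \<longrightarrow> y \<noteq> 0 \<longrightarrow> v (x * y) = v x + v y) \<and>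
     (\<forall>x y. x \<noteq> 0 \<longrightarrow> y \<noteq> 0 \<longrightarrow> x + y \<noteq> 0 \<longrightarrow> min (v x) (v y) \<le> v (x + y)) \<and>
     (\<forall>n. \<exists>x. x \<noteq> 0 \<and> v x = n)"

definition vring :: "('a::field \<Rightarrow> int) \<Rightarrow> 'a set" where
  "vring v = {x. x = 0 \<or> 0 \<le> v x}"

definition vmax :: "('a::field \<Rightarrow> int) \<Rightarrow> 'a set" where
  "vmax v = {x. x = 0 \<or> 1 \<le> v x}"

definition vunits :: "('a::field \<Rightarrow> int) \<Rightarrow> 'a set" where
  "vunits v = {x. x \<noteq> 0 \<and> v x = 0}"

definition residue_classes :: "('a::field \<Rightarrow> int) \<Rightarrow> 'a set set" where
  "residue_classes v = (\<lambda>x. {y \<in> vring v. x - y \<in> vmax v}) ` vring v"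

definition vclose :: "('a::field \<Rightarrow> int) \<Rightarrow> int \<Rightarrow> 'a \<Rightarrow> bool" where
  "vclose v k x \<longleftrightarrow> x = 0 \<or> k \<le> v x"

definition vcomplete :: "('a::field \<Rightarrow> int) \<Rightarrow> bool" where
  "vcomplete v \<longleftrightarrow>
     (\<forall>s::nat \<Rightarrow> 'a. (\<forall>k. \<exists>N. \<forall>m\<ge>N. \<forall>n\<ge>N. vclose v k (s m - s n)) \<longrightarrow>
        (\<exists>l. \<forall>k. \<exists>N. \<forall>n\<ge>N. vclose v k (s n - l)))"

definition nonarch_local_field :: "('a::field \<Rightarrow> int) \<Rightarrow> bool" where
  "nonarch_local_field v \<longleftrightarrow>
     discrete_valuation v \<and> vcomplete v \<and> finite (residue_classes v)"

section \<open>The etale algebra K = F[X]/(X^2 - d), d nonzero, on pairs (a,b) = a + b X\<close>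

definition ksc :: "'a::field \<Rightarrow> 'a \<times> 'a \<Rightarrow> 'a \<times> 'a" where
  "ksc c z = (c * fst z, c * snd z)"

definition kmul :: "'a::field \<Rightarrow> 'a \<times> 'a \<Rightarrow> 'a \<times> 'a \<Rightarrow> 'a \<times> 'a" where
  "kmul d z w = (fst z * fst w + d * snd z * snd w, fst z * snd w + snd z * fst w)"

primrec kpow :: "'a::field \<Rightarrow> 'a \<times> 'a \<Rightarrow> nat \<Rightarrow> 'a \<times> 'a" where
  "kpow d z 0 = (1, 0)"
| "kpow d z (Suc n) = kmul d z (kpow d z n)"

text \<open>Norm N(z) = z z', where (a,b)' = (a,-b).\<close>
definition knorm :: "'a::field \<Rightarrow> 'a \<times> 'a \<Rightarrow> 'a" where
  "knorm d z = fst z ^ 2 - d * snd z ^ 2"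

definition OK :: "'a::field \<Rightarrow> ('a \<Rightarrow> int) \<Rightarrow> ('a \<times> 'a) set" where
  "OK d v = {z. \<exists>n cs. (\<forall>i<n. cs i \<in> vring v) \<and>
                 kpow d z n + (\<Sum>i<n. ksc (cs i) (kpow d z i)) = 0}"

definition kbil :: "'a::field \<Rightarrow> 'a \<times> 'a \<Rightarrow> 'a \<times> 'a \<Rightarrow> 'a" where
  "kbil d x y = knorm d (x + y) - knorm d x - knorm d y"

text \<open>Reflection tau_a(x) = x - 2 <a,x>/<a,a> a, with <a,a> = 2 q(a).\<close>
definition krefl :: "'a::field \<Rightarrow> 'a \<times> 'a \<Rightarrow> 'a \<times> 'a \<Rightarrow> 'a \<times> 'a" where
  "krefl d a x = x - ksc (kbil d a x / knorm d a) a"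

definition klinear :: "('a::field \<times> 'a \<Rightarrow> 'a \<times> 'a) \<Rightarrow> bool" where
  "klinear g \<longleftrightarrow> (\<forall>x y. g (x + y) = g x + g y) \<and> (\<forall>c x. g (ksc c x) = ksc c (g x))"

definition kdet :: "('a::field \<times> 'a \<Rightarrow> 'a \<times> 'a) \<Rightarrow> 'a" where
  "kdet g = fst (g (1, 0)) * snd (g (0, 1)) - fst (g (0, 1)) * snd (g (1, 0))"

definition OV :: "'a::field \<Rightarrow> ('a \<times> 'a \<Rightarrow> 'a \<times> 'a) set" where
  "OV d = {g. klinear g \<and> bij g \<and> (\<forall>x. knorm d (g x) = knorm d x)}"

definition SOV :: "'a::field \<Rightarrow> ('a \<times> 'a \<Rightarrow> 'a \<times> 'a) set" where
  "SOV d = {g \<in> OV d. kdet g = 1}"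

definition Olat :: "'a::field \<Rightarrow> ('a \<times> 'a) set \<Rightarrow> ('a \<times> 'a \<Rightarrow> 'a \<times> 'a) set" where
  "Olat d L = {g \<in> OV d. g ` L = L}"

definition SOlat :: "'a::field \<Rightarrow> ('a \<times> 'a) set \<Rightarrow> ('a \<times> 'a \<Rightarrow> 'a \<times> 'a) set" where
  "SOlat d L = {g \<in> SOV d. g ` L = L}"

text \<open>Spinor norm image sn_F(G), as the union of square classes in F^x:
  c lies in it iff c represents sn_F(g) for some g in G, i.e. c is the product
  of q(a_i) for some factorization of g into reflections tau_{a_i}.\<close>
definition spinor_norms :: "'a::field \<Rightarrow> ('a \<times> 'a \<Rightarrow> 'a \<times> 'a) set \<Rightarrow> 'a set" where
  "spinor_norms d G = {c. \<exists>g\<in>G. \<exists>as. (\<forall>a\<in>set as. knorm d a \<noteq> 0) \<and>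
        g = foldr (\<lambda>a h. krefl d a \<circ> h) as id \<and> c = prod_list (map (knorm d) as)}"

definition dual_lattice :: "'a::field \<Rightarrow> ('a \<Rightarrow> int) \<Rightarrow> ('a \<times> 'a) set \<Rightarrow> ('a \<times> 'a) set" where
  "dual_lattice d v L = {x. \<forall>l\<in>L. kbil d x l \<in> vring v}"

text \<open>f is a lift (on representatives in the dual lattice) of an element of O(D_L):
  an O_F-linear automorphism of L^#/L preserving the quadratic map D_L \<rightarrow> F/O_F.\<close>
definition disc_isometry :: "'a::field \<Rightarrow> ('a \<Rightarrow> int) \<Rightarrow> ('a \<times> 'a) set
     \<Rightarrow> ('a \<times> 'a \<Rightarrow> 'a \<times> 'a) \<Rightarrow> bool" where
  "disc_isometry d v L f \<longleftrightarrow>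
     (\<forall>x\<in>dual_lattice d v L. f x \<in> dual_lattice d v L) \<and>
     (\<forall>x\<in>dual_lattice d v L. \<forall>y\<in>dual_lattice d v L. x - y \<in> L \<longrightarrow> f x - f y \<in> L) \<and>
     (\<forall>x\<in>dual_lattice d v L. \<forall>y\<in>dual_lattice d v L. f (x + y) - f x - f y \<in> L) \<and>
     (\<forall>c\<in>vring v. \<forall>x\<in>dual_lattice d v L. f (ksc c x) - ksc c (f x) \<in> L) \<and>
     (\<forall>y\<in>dual_lattice d v L. \<exists>x\<in>dual_lattice d v L. f x - y \<in> L) \<and>
     (\<forall>x\<in>dual_lattice d v L. \<forall>y\<in>dual_lattice d v L. f x - f y \<in> L \<longrightarrow> x - y \<in> L) \<and>
     (\<forall>x\<in>dual_lattice d v L. knorm d (f x) - knorm d x \<in> vring v)"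

end

theory Submission
  imports Defs
begin

text \<open>
  (a) For \<open>N(a) \<noteq> 0\<close> the product \<open>\<tau>\<^sub>a \<tau>\<^sub>1\<close> is multiplication by \<open>a/a'\<close>, a proper
  isometry of spinor norm \<open>N(a)\<close>. If \<open>K\<close> is a field, \<open>\<O>\<^sub>K\<close> consists of the elements of integral
  norm, so every such multiplication preserves it and all of \<open>N(K\<^sup>\<times>)\<close> is attained by
  \<open>SO(\<O>\<^sub>K)\<close>; conversely a spinor norm is a product of norms, hence a norm. If \<open>K = F \<times> F\<close>,
  a product of reflections acts on the two coordinates by \<open>(x, y) \<mapsto> (l y, x/l)\<close> or
  \<open>(l x, y/l)\<close> and has spinor norm \<open>\<plusminus>l\<close> up to squares; it preserves \<open>\<O>\<^sub>F \<times> \<O>\<^sub>F\<close> only if \<open>l\<close>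
  is a unit, and every unit arises from \<open>a = (u, 1)\<close>.

  (b) Write \<open>d = d\<^sub>0 s\<^sup>2\<close> with \<open>v d\<^sub>0 \<in> {0, 1}\<close>. If \<open>d\<^sub>0 \<equiv> 1 mod 4\<close> the lattice \<open>\<O>\<^sub>K\<close> is unimodular
  and there is nothing to lift. Otherwise \<open>\<O>\<^sub>K = \<O>\<^sub>F + \<O>\<^sub>F \<surd>d\<^sub>0\<close>, the discriminant module has
  an explicit basis \<open>e\<^sub>1, e\<^sub>2\<close>, and an isometry of it is determined by the classes of
  \<open>f e\<^sub>1, f e\<^sub>2\<close>. Comparing the norms of \<open>f e\<^sub>i\<close> and \<open>\<langle>f e\<^sub>1, f e\<^sub>2\<rangle>\<close> modulo \<open>\<O>\<^sub>F\<close> with those of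
  \<open>e\<^sub>i\<close> forces \<open>f = \<plusminus>1\<close> in the ramified case and \<open>f\<close> to fix or exchange \<open>e\<^sub>1, e\<^sub>2\<close> in the dyadic
  unramified case; \<open>\<plusminus>1\<close> and multiplication by a suitable element of norm one lift these.
\<close>

section \<open>Discretely valued fields\<close>

locale valued_field =
  fixes v :: "'a::field \<Rightarrow> int"
  assumes discrete_valuation: "discrete_valuation v"
begin

lemma v_mult: "x \<noteq> 0 \<Longrightarrow> y \<noteq> 0 \<Longrightarrow> v (x * y) = v x + v y"
  using discrete_valuation unfolding discrete_valuation_def by blast

lemma v_add_ge: "x \<noteq> 0 \<Longrightarrow> y \<noteq> 0 \<Longrightarrow> x + y \<noteq> 0 \<Longrightarrow> min (v x) (v y) \<le> v (x + y)"
  using discrete_valuation unfolding discrete_valuation_def by blast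

lemma v_surj: "\<exists>x. x \<noteq> 0 \<and> v x = n"
  using discrete_valuation unfolding discrete_valuation_def by blast

lemma v_one [simp]: "v 1 = 0"
  using v_mult[of 1 1] by simp

lemma v_minus_one [simp]: "v (-1) = 0"
  using v_mult[of "-1" "-1"] by simp

lemma v_uminus [simp]: "v (- x) = v x"
proof (cases "x = 0")
  case False
  then show ?thesis using v_mult[of "-1" x] by simp
qed simp

lemma v_inverse: "x \<noteq> 0 \<Longrightarrow> v (inverse x) = - v x"
  using v_mult[of x "inverse x"] by simp

lemma v_divide: "x \<noteq> 0 \<Longrightarrow> y \<noteq> 0 \<Longrightarrow> v (x / y) = v x - v y"
  by (simp add: divide_inverse v_mult v_inverse)

lemma v_power: "x \<noteq> 0 \<Longrightarrow> v (x ^ n) = int n * v x"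
  by (induction n) (simp_all add: v_mult algebra_simps)

lemma v_power2: "x \<noteq> 0 \<Longrightarrow> v (x\<^sup>2) = 2 * v x"
  using v_power[of x 2] by simp

lemma v_add_neq:
  assumes x: "x \<noteq> 0" and y: "y \<noteq> 0" and ne: "v x \<noteq> v y"
  shows "x + y \<noteq> 0 \<and> v (x + y) = min (v x) (v y)"
proof -
  have strict: "a + b \<noteq> 0 \<and> v (a + b) = v a"
    if a: "a \<noteq> 0" and b: "b \<noteq> 0" and lt: "v a < v b" for a b
  proof -
    have ab: "a + b \<noteq> 0"
    proof
      assume "a + b = 0"
      then have "b = - a" by (simp add: add.commute eq_neg_iff_add_eq_0)
      then show False using lt by simp
    qed
    have "min (v a) (v b) \<le> v (a + b)" using v_add_ge a b ab by blast
    moreover have "min (v (a + b)) (v (- b)) \<le> v (a + b + - b)"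
      using v_add_ge[of "a + b" "- b"] ab a b by simp
    ultimately show ?thesis using ab lt by auto
  qed
  show ?thesis
    using strict[OF x y] strict[OF y x] ne by (cases "v x < v y") (auto simp: add.commute)
qed

text \<open>\<open>vc k x\<close> says that \<open>x\<close> lies in the \<open>k\<close>-th power of the maximal ideal;
  it absorbs the junk value of \<open>v\<close> at \<open>0\<close>.\<close>

abbreviation vc :: "int \<Rightarrow> 'a \<Rightarrow> bool" where "vc \<equiv> vclose v"

abbreviation Ov :: "'a set" where "Ov \<equiv> vring v"

lemma vc_zero [simp]: "vc k 0"
  by (simp add: vclose_def)

lemma vc_add: "vc k x \<Longrightarrow> vc k y \<Longrightarrow> vc k (x + y)"
  unfolding vclose_def using v_add_ge[of x y] by fastforce

lemma vc_uminus [simp]: "vc k (- x) = vc k x"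
  unfolding vclose_def by simp

lemma vc_diff: "vc k x \<Longrightarrow> vc k y \<Longrightarrow> vc k (x - y)"
  using vc_add[of k x "- y"] by simp

lemma vc_commute_diff: "vc k (x - y) \<longleftrightarrow> vc k (y - x)"
  by (metis minus_diff_eq vc_uminus)

lemma vc_mult: "vc k x \<Longrightarrow> vc m y \<Longrightarrow> vc (k + m) (x * y)"
  unfolding vclose_def by (cases "x = 0 \<or> y = 0") (auto simp: v_mult)

lemma vc_mono: "vc k x \<Longrightarrow> m \<le> k \<Longrightarrow> vc m x"
  unfolding vclose_def by auto

lemma vc_sum: "(\<And>i. i \<in> A \<Longrightarrow> vc k (f i)) \<Longrightarrow> vc k (sum f A)"
  by (induction A rule: infinite_finite_induct) (auto intro: vc_add)

lemma vc_all_imp_zero: "(\<And>k. vc k x) \<Longrightarrow> x = 0"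
proof -
  assume "\<And>k. vc k x"
  then have "x = 0 \<or> v x + 1 \<le> v x" unfolding vclose_def by blast
  then show "x = 0" by simp
qed

lemma vc_divide: "vc k x \<Longrightarrow> y \<noteq> 0 \<Longrightarrow> vc (k - v y) (x / y)"
  by (cases "x = 0") (simp_all add: vclose_def v_divide)

lemma vc_unit_factor: "vc k (x * y) \<Longrightarrow> y \<noteq> 0 \<Longrightarrow> v y = 0 \<Longrightarrow> vc k x"
  by (cases "x = 0") (auto simp: vclose_def v_mult)

lemma vc_sq_zero_iff: "vc (2 * k) (x\<^sup>2) \<longleftrightarrow> vc k x"
  by (cases "x = 0") (auto simp: vclose_def v_power2)

lemma Ov_iff_vc: "x \<in> Ov \<longleftrightarrow> vc 0 x"
  by (simp add: vring_def vclose_def)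

lemma vmax_iff_vc: "x \<in> vmax v \<longleftrightarrow> vc 1 x"
  by (simp add: vmax_def vclose_def)

lemma O_add: "x \<in> Ov \<Longrightarrow> y \<in> Ov \<Longrightarrow> x + y \<in> Ov"
  by (simp add: Ov_iff_vc vc_add)

lemma O_uminus [simp]: "- x \<in> Ov \<longleftrightarrow> x \<in> Ov"
  by (simp add: Ov_iff_vc)

lemma O_diff: "x \<in> Ov \<Longrightarrow> y \<in> Ov \<Longrightarrow> x - y \<in> Ov"
  by (simp add: Ov_iff_vc vc_diff)

lemma O_mult: "x \<in> Ov \<Longrightarrow> y \<in> Ov \<Longrightarrow> x * y \<in> Ov"
  using vc_mult[of 0 x 0 y] by (simp add: Ov_iff_vc)

lemma O_zero [simp]: "0 \<in> Ov"
  by (simp add: vring_def)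

lemma O_one [simp]: "1 \<in> Ov"
  by (simp add: vring_def)

lemma O_power: "x \<in> Ov \<Longrightarrow> x ^ n \<in> Ov"
  by (induction n) (auto intro: O_mult)

lemma O_of_nat [simp]: "of_nat n \<in> Ov"
  by (induction n) (auto intro: O_add)

lemma O_numeral [simp]: "numeral n \<in> Ov"
  using O_of_nat[of "numeral n"] by simp

lemma O_divide_unit: "y \<in> Ov \<Longrightarrow> x \<noteq> 0 \<Longrightarrow> v x = 0 \<Longrightarrow> y / x \<in> Ov"
  by (cases "y = 0") (simp_all add: vring_def v_divide)

lemma O_divide_vc: "vc k x \<Longrightarrow> y \<noteq> 0 \<Longrightarrow> v y \<le> k \<Longrightarrow> x / y \<in> Ov"
  using vc_divide[of k x y] by (simp add: Ov_iff_vc vc_mono)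

lemma vc_of_O_divide: "x / y \<in> Ov \<Longrightarrow> y \<noteq> 0 \<Longrightarrow> vc k y \<Longrightarrow> vc k x"
  using vc_mult[of 0 "x / y" k y] by (simp add: Ov_iff_vc)

lemma vc_mult_cases: "x \<in> Ov \<Longrightarrow> y \<in> Ov \<Longrightarrow> vc 1 (x * y) \<Longrightarrow> vc 1 x \<or> vc 1 y"
  by (cases "x = 0 \<or> y = 0") (auto simp: vclose_def vring_def v_mult)

lemma integral_imp_O:
  assumes cs: "\<forall>i<n. cs i \<in> Ov" and eq: "x ^ n + (\<Sum>i<n. cs i * x ^ i) = 0"
  shows "x \<in> Ov"
proof (rule ccontr)
  assume "x \<notin> Ov"
  then have x0: "x \<noteq> 0" and vx: "v x < 0" by (auto simp: vring_def)
  have "vc ((int n - 1) * v x) (cs i * x ^ i)" if "i < n" for i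
  proof -
    have "vc (0 + int i * v x) (cs i * x ^ i)"
      using vc_mult[of 0 "cs i" "int i * v x" "x ^ i"] cs that
      by (simp add: Ov_iff_vc vclose_def v_power x0)
    then show ?thesis
      by (rule vc_mono) (use that vx in \<open>simp add: mult_right_mono_neg\<close>)
  qed
  then have "vc ((int n - 1) * v x) (\<Sum>i<n. cs i * x ^ i)" by (intro vc_sum) auto
  then have "vc ((int n - 1) * v x) (x ^ n)"
    using eq by (metis add.inverse_unique vc_uminus)
  then show False using x0 vx by (simp add: vclose_def v_power algebra_simps)
qed

lemma vcomplete_converges:
  assumes complete: "vcomplete v" and step: "\<And>n. vc (int n + 1) (y (Suc n) - y n)"
  obtains l where "\<forall>k. \<exists>N. \<forall>n\<ge>N. vc k (y n - l)"
proof -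
  have tail: "vc (int N + 1) (y (N + j) - y N)" for N j
  proof (induction j)
    case (Suc j)
    have "vc (int N + 1) (y (Suc (N + j)) - y (N + j))"
      using step[of "N + j"] by (rule vc_mono) simp
    from vc_add[OF this Suc] show ?case by simp
  qed simp
  have "\<exists>N. \<forall>m\<ge>N. \<forall>n\<ge>N. vc k (y m - y n)" for k
  proof (intro exI allI impI)
    fix m n assume "nat k \<le> m" "nat k \<le> n"
    then obtain a b where "m = nat k + a" "n = nat k + b" by (metis le_add_diff_inverse)
    then have "y m - y n = (y (nat k + a) - y (nat k)) - (y (nat k + b) - y (nat k))" by simp
    moreover have "vc (int (nat k) + 1) ((y (nat k + a) - y (nat k)) - (y (nat k + b) - y (nat k)))"
      using vc_diff[OF tail tail] .
    moreover have "k \<le> int (nat k) + 1" by simp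
    ultimately show "vc k (y m - y n)" using vc_mono by metis
  qed
  then show ?thesis using complete that unfolding vcomplete_def by blast
qed

text \<open>Hensel's lemma for \<open>y\<^sup>2 - y + c\<close>: the iteration \<open>y \<mapsto> y\<^sup>2 + c\<close> from \<open>0\<close>
  contracts, its steps gaining one valuation each time.\<close>

lemma hensel_root:
  assumes complete: "vcomplete v" and c: "vc 1 c"
  shows "\<exists>y. y * y - y + c = 0"
proof -
  define y where "y = rec_nat 0 (\<lambda>_ y. y\<^sup>2 + c)"
  have y0: "y 0 = 0" and yS: "\<And>n. y (Suc n) = (y n)\<^sup>2 + c" by (simp_all add: y_def)
  have y1: "vc 1 (y n)" for n
  proof (induction n)
    case (Suc n)
    have "vc (1 + 1) (y n * y n)" using vc_mult[OF Suc Suc] .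
    then have "vc 1 ((y n)\<^sup>2)" by (simp add: power2_eq_square vc_mono)
    then show ?case by (simp add: yS vc_add c)
  qed (simp add: y0)
  have "vc (int n + 1) (y (Suc n) - y n)" for n
  proof (induction n)
    case (Suc n)
    have "y (Suc (Suc n)) - y (Suc n) = (y (Suc n) - y n) * (y (Suc n) + y n)"
      by (simp add: yS algebra_simps power2_eq_square)
    moreover have "vc (int n + 1 + 1) ((y (Suc n) - y n) * (y (Suc n) + y n))"
      using vc_mult[OF Suc vc_add[OF y1 y1]] by simp
    ultimately show ?case by simp
  qed (use c in \<open>simp add: y0 yS\<close>)
  then obtain l where l: "\<forall>k. \<exists>N. \<forall>n\<ge>N. vc k (y n - l)"
    using vcomplete_converges[OF complete] by blast
  have "vc k (l * l - l + c)" for k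
  proof -
    obtain N where N: "\<forall>n\<ge>N. vc (max k 0) (y n - l)" using l by blast
    have a: "vc (max k 0) (y N - l)" and b: "vc (max k 0) (y (Suc N) - l)" using N by auto
    have "vc 0 (y N - l)" "vc 0 (y N)" using a y1[of N] vc_mono by fastforce+
    then have "vc 0 (l + y N)" by (metis vc_add vc_diff add_diff_cancel_left' diff_add_cancel)
    then have "vc (max k 0 + 0) ((y N - l) * (l + y N))" using vc_mult a by blast
    then have "vc (max k 0) ((y N - l) * (l + y N) - (y (Suc N) - l))" using b vc_diff by simp
    moreover have "(y N - l) * (l + y N) - (y (Suc N) - l) = - (l * l - l + c)"
      by (simp add: yS algebra_simps power2_eq_square)
    ultimately have "vc (max k 0) (l * l - l + c)" by (metis vc_uminus)
    then show ?thesis by (rule vc_mono) simp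
  qed
  then show ?thesis using vc_all_imp_zero by blast
qed

end


section \<open>The algebra \<open>K = F[X]/(X\<^sup>2 - d)\<close>\<close>

definition kconj :: "'a::field \<times> 'a \<Rightarrow> 'a \<times> 'a" where
  "kconj z = (fst z, - snd z)"

text \<open>When \<open>d = t\<^sup>2\<close>, \<open>kemb t\<close> and \<open>kemb (-t)\<close> are the two projections of \<open>K \<cong> F \<times> F\<close>.\<close>

definition kemb :: "'a::field \<Rightarrow> 'a \<times> 'a \<Rightarrow> 'a" where
  "kemb t z = fst z + t * snd z"

lemma kmul_assoc: "kmul d (kmul d x y) z = kmul d x (kmul d y z)"
  by (simp add: kmul_def algebra_simps)

lemma kmul_one_left: "kmul d (1, 0) x = x"
  by (simp add: kmul_def)

lemma kmul_kconj_self: "kmul d (kconj a) a = (knorm d a, 0)" "kmul d a (kconj a) = (knorm d a, 0)"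
  by (simp_all add: kmul_def kconj_def knorm_def power2_eq_square algebra_simps)

lemma kmul_kconj_cancel:
  assumes "knorm d a = 1"
  shows "kmul d (kconj a) (kmul d a x) = x" "kmul d a (kmul d (kconj a) x) = x"
  by (simp_all add: kmul_assoc[symmetric] kmul_kconj_self assms kmul_one_left)

lemma knorm_zero [simp]: "knorm d 0 = 0"
  by (simp add: knorm_def)

lemma knorm_uminus [simp]: "knorm d (- z) = knorm d z"
  by (simp add: knorm_def)

lemma knorm_kconj [simp]: "knorm d (kconj z) = knorm d z"
  by (simp add: knorm_def kconj_def)

lemma knorm_kmul: "knorm d (kmul d z w) = knorm d z * knorm d w"
  by (simp add: knorm_def kmul_def power2_eq_square algebra_simps)

lemma knorm_ksc: "knorm d (ksc c z) = c\<^sup>2 * knorm d z"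
  by (simp add: knorm_def ksc_def power2_eq_square algebra_simps)

lemma knorm_kpow: "knorm d (kpow d z n) = knorm d z ^ n"
  by (induction n) (simp add: knorm_def, simp add: knorm_kmul)

lemma knorm_add: "knorm d (x + y) = knorm d x + knorm d y + kbil d x y"
  by (simp add: kbil_def)

lemma kbil_eq: "kbil d x y = 2 * (fst x * fst y - d * snd x * snd y)"
  by (simp add: kbil_def knorm_def power2_eq_square algebra_simps)

lemma kbil_add_left: "kbil d (x + y) l = kbil d x l + kbil d y l"
  by (simp add: kbil_eq algebra_simps)

lemma kbil_ksc_left: "kbil d (ksc c x) l = c * kbil d x l"
  by (simp add: kbil_eq ksc_def algebra_simps)

lemma kemb_add: "kemb t (x + y) = kemb t x + kemb t y"
  by (simp add: kemb_def algebra_simps)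

lemma kemb_ksc: "kemb t (ksc c z) = c * kemb t z"
  by (simp add: kemb_def ksc_def algebra_simps)

lemma kemb_sum: "kemb t (sum f A) = (\<Sum>i\<in>A. kemb t (f i))"
  by (induction A rule: infinite_finite_induct) (simp_all add: kemb_add, simp_all add: kemb_def)

lemma kemb_kconj: "kemb t (kconj z) = kemb (-t) z"
  by (simp add: kemb_def kconj_def)

lemma kemb_kmul: "d = t\<^sup>2 \<Longrightarrow> kemb t (kmul d z w) = kemb t z * kemb t w"
  by (simp add: kemb_def kmul_def power2_eq_square algebra_simps)

lemma kemb_kpow: "d = t\<^sup>2 \<Longrightarrow> kemb t (kpow d z n) = kemb t z ^ n"
  by (induction n) (simp_all add: kemb_kmul, simp add: kemb_def)

lemma knorm_kemb: "d = t\<^sup>2 \<Longrightarrow> knorm d z = kemb t z * kemb (-t) z"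
  by (simp add: kemb_def knorm_def power2_eq_square algebra_simps)

lemma kbil_kemb: "d = t\<^sup>2 \<Longrightarrow> kbil d a w = kemb t a * kemb (-t) w + kemb t w * kemb (-t) a"
  by (simp add: kbil_eq kemb_def power2_eq_square algebra_simps)

lemma knorm_eq_0_iff:
  assumes "\<nexists>t. d = t\<^sup>2"
  shows "knorm d z = 0 \<longleftrightarrow> z = 0"
proof
  assume N: "knorm d z = 0"
  show "z = 0"
  proof (cases "snd z = 0")
    case False
    then have "d = (fst z / snd z)\<^sup>2" using N by (simp add: knorm_def power_divide)
    then show ?thesis using assms by blast
  qed (use N in \<open>simp add: knorm_def prod_eq_iff\<close>)
qed simp

section \<open>The ring of integers \<open>\<O>\<^sub>K\<close>\<close>

context valued_field
begin

lemma OK_intro: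
  assumes "2 * fst z \<in> Ov" "knorm d z \<in> Ov"
  shows "z \<in> OK d v"
proof -
  define cs where "cs = (\<lambda>i::nat. if i = 0 then knorm d z else - (2 * fst z))"
  have "\<forall>i<2. cs i \<in> Ov" using assms by (auto simp: cs_def less_2_cases_iff)
  moreover have "kpow d z 2 + (\<Sum>i<2. ksc (cs i) (kpow d z i)) = 0"
    by (simp add: cs_def numeral_2_eq_2 kmul_def ksc_def zero_prod_def knorm_def
        power2_eq_square algebra_simps)
  ultimately show ?thesis unfolding OK_def by blast
qed

lemma OK_split_iff:
  assumes dt: "d = t\<^sup>2"
  shows "z \<in> OK d v \<longleftrightarrow> kemb t z \<in> Ov \<and> kemb (-t) z \<in> Ov"
proof
  have "kemb t' z \<in> Ov" if z: "z \<in> OK d v" and t': "d = t'\<^sup>2" for t'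
  proof -
    obtain n cs where cs: "\<forall>i<n. cs i \<in> Ov"
      and eq: "kpow d z n + (\<Sum>i<n. ksc (cs i) (kpow d z i)) = 0"
      using z unfolding OK_def by blast
    have "kemb t' (kpow d z n + (\<Sum>i<n. ksc (cs i) (kpow d z i))) = 0"
      using eq by (simp add: kemb_def)
    then have "kemb t' z ^ n + (\<Sum>i<n. cs i * kemb t' z ^ i) = 0"
      by (simp add: kemb_add kemb_sum kemb_ksc kemb_kpow t')
    then show ?thesis using integral_imp_O cs by blast
  qed
  then show "z \<in> OK d v \<Longrightarrow> kemb t z \<in> Ov \<and> kemb (-t) z \<in> Ov"
    using dt by simp
next
  assume h: "kemb t z \<in> Ov \<and> kemb (-t) z \<in> Ov"
  have "2 * fst z = kemb t z + kemb (-t) z" by (simp add: kemb_def)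
  moreover have "knorm d z = kemb t z * kemb (-t) z" by (rule knorm_kemb[OF dt])
  ultimately show "z \<in> OK d v" using h OK_intro O_add O_mult by metis
qed

end

locale quadratic_local = valued_field +
  fixes d :: 'a
  assumes complete: "vcomplete v" and two_nonzero: "(2::'a) \<noteq> 0" and d_nonzero: "d \<noteq> 0"
begin

lemma four_nonzero: "(4::'a) \<noteq> 0"
  using two_nonzero by (metis mult_2 numeral_Bit0 mult_eq_0_iff one_add_one)

lemma v_two_nonneg: "0 \<le> v 2"
  using O_numeral[of "num.Bit0 num.One"] two_nonzero by (simp add: vring_def)

text \<open>If \<open>K\<close> is a field, the norm bounds the trace: otherwise Hensel's lemma would
  produce a root of \<open>X\<^sup>2 - Tr(z) X + N(z)\<close> in \<open>F\<close>, making \<open>d\<close> a square.\<close>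

lemma v_knorm_le_trace:
  assumes nsq: "\<nexists>t. d = t\<^sup>2" and N: "knorm d z \<noteq> 0" and a: "fst z \<noteq> 0"
  shows "v (knorm d z) \<le> 2 * v (2 * fst z)"
proof (rule ccontr)
  assume "\<not> ?thesis"
  then have lt: "2 * v (2 * fst z) < v (knorm d z)" by simp
  define A where "A = 2 * fst z"
  have A0: "A \<noteq> 0" using a two_nonzero by (simp add: A_def)
  define c where "c = knorm d z / A\<^sup>2"
  have "v c = v (knorm d z) - 2 * v A" unfolding c_def using A0 N by (simp add: v_divide v_power2)
  then have c1: "vc 1 c" using lt by (simp add: vclose_def A_def)
  then obtain y where y: "y * y - y + c = 0" using hensel_root complete by blast
  define x where "x = A * y"
  have "x * x - A * x + knorm d z = A\<^sup>2 * (y * y - y + c)"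
    using A0 by (simp add: x_def c_def power2_eq_square algebra_simps)
  then have "x * x - A * x + knorm d z = 0" using y by simp
  then have eq: "(x - fst z)\<^sup>2 = d * (snd z)\<^sup>2"
    by (simp add: A_def knorm_def power2_eq_square algebra_simps)
  show False
  proof (cases "snd z = 0")
    case True
    then have "c = 1 / 4" using A0 a by (simp add: c_def A_def knorm_def power2_eq_square)
    then have "v c = - v 4" using four_nonzero v_divide[of 1 4] by (simp only:) simp
    moreover have "v (4::'a) = v 2 + v 2" using v_mult[of 2 2] two_nonzero by simp
    ultimately show False using c1 \<open>c = 1 / 4\<close> four_nonzero v_two_nonneg by (simp add: vclose_def)
  next
    case False
    then have "d = ((x - fst z) / snd z)\<^sup>2" using eq by (simp add: power_divide)
    then show False using nsq by blast
  qed
qed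

lemma trace_in_O_if_norm_in_O:
  assumes nsq: "\<nexists>t. d = t\<^sup>2" and N: "knorm d z \<in> Ov"
  shows "2 * fst z \<in> Ov"
proof (cases "fst z = 0")
  case False
  then have N0: "knorm d z \<noteq> 0" using knorm_eq_0_iff[OF nsq] by (auto simp: prod_eq_iff)
  have "v (knorm d z) \<le> 2 * v (2 * fst z)" using v_knorm_le_trace[OF nsq N0 False] .
  moreover have "0 \<le> v (knorm d z)" using N N0 by (simp add: vring_def)
  ultimately show ?thesis by (simp add: vring_def)
qed simp

lemma vc_kbil:
  assumes nsq: "\<nexists>t. d = t\<^sup>2" and x: "vc k (knorm d x)" and y: "vc k (knorm d y)"
  shows "vc k (kbil d x y)"
proof (cases "kbil d x y = 0")
  case False
  define w where "w = kmul d x (kconj y)"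
  have bw: "kbil d x y = 2 * fst w"
    by (simp add: w_def kbil_eq kmul_def kconj_def)
  then have fw: "fst w \<noteq> 0" using False by auto
  have "x \<noteq> 0" "y \<noteq> 0" using False by (auto simp: kbil_eq)
  then have nx: "knorm d x \<noteq> 0" and ny: "knorm d y \<noteq> 0"
    using knorm_eq_0_iff[OF nsq] by auto
  have nw: "knorm d w = knorm d x * knorm d y" by (simp add: w_def knorm_kmul)
  have "v (knorm d w) \<le> 2 * v (kbil d x y)"
    using v_knorm_le_trace[OF nsq _ fw] nw nx ny bw by simp
  moreover have "v (knorm d w) = v (knorm d x) + v (knorm d y)" using nw nx ny v_mult by simp
  moreover have "k \<le> v (knorm d x)" "k \<le> v (knorm d y)" using x y nx ny by (auto simp: vclose_def)
  ultimately show ?thesis using False by (simp add: vclose_def)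
qed simp

lemma vc_knorm_sum:
  assumes nsq: "\<nexists>t. d = t\<^sup>2"
  shows "(\<And>i. i \<in> A \<Longrightarrow> vc k (knorm d (f i))) \<Longrightarrow> vc k (knorm d (sum f A))"
proof (induction A rule: infinite_finite_induct)
  case (insert x F)
  then show ?case
    by (simp add: knorm_add vc_add vc_kbil[OF nsq])
qed simp_all

lemma OK_nonsplit_iff:
  assumes nsq: "\<nexists>t. d = t\<^sup>2"
  shows "z \<in> OK d v \<longleftrightarrow> knorm d z \<in> Ov"
proof
  assume "z \<in> OK d v"
  then obtain n cs where cs: "\<forall>i<n. cs i \<in> Ov"
    and eq: "kpow d z n + (\<Sum>i<n. ksc (cs i) (kpow d z i)) = 0"
    unfolding OK_def by blast
  show "knorm d z \<in> Ov"
  proof (rule ccontr)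
    assume "knorm d z \<notin> Ov"
    then have N0: "knorm d z \<noteq> 0" and W: "v (knorm d z) < 0" by (auto simp: vring_def)
    define W where "W = v (knorm d z)"
    have "vc ((int n - 1) * W) (knorm d (ksc (cs i) (kpow d z i)))" if "i < n" for i
    proof -
      have "vc (0 + int i * W) ((cs i)\<^sup>2 * knorm d z ^ i)"
        using vc_mult[of 0 "(cs i)\<^sup>2" "int i * W" "knorm d z ^ i"] cs that O_power[of "cs i" 2]
        by (simp add: Ov_iff_vc vclose_def v_power N0 W_def)
      then have "vc (int i * W) (knorm d (ksc (cs i) (kpow d z i)))"
        by (simp add: knorm_ksc knorm_kpow)
      then show ?thesis
        by (rule vc_mono) (use that W in \<open>simp add: W_def mult_right_mono_neg\<close>)
    qed
    then have "vc ((int n - 1) * W) (knorm d (\<Sum>i<n. ksc (cs i) (kpow d z i)))"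
      by (intro vc_knorm_sum[OF nsq]) auto
    moreover have "kpow d z n = - (\<Sum>i<n. ksc (cs i) (kpow d z i))"
      using eq by (simp add: eq_neg_iff_add_eq_0)
    ultimately have "vc ((int n - 1) * W) (knorm d z ^ n)"
      by (metis knorm_uminus knorm_kpow)
    then show False using N0 W by (simp add: vclose_def v_power W_def algebra_simps)
  qed
next
  assume "knorm d z \<in> Ov"
  then show "z \<in> OK d v" using OK_intro trace_in_O_if_norm_in_O[OF nsq] by blast
qed

lemma OK_iff_trace_norm: "z \<in> OK d v \<longleftrightarrow> 2 * fst z \<in> Ov \<and> knorm d z \<in> Ov"
proof (cases "\<exists>t. d = t\<^sup>2")
  case True
  then obtain t where t: "d = t\<^sup>2" by blast
  have "2 * fst z = kemb t z + kemb (-t) z" by (simp add: kemb_def)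
  moreover have "knorm d z = kemb t z * kemb (-t) z" by (rule knorm_kemb[OF t])
  ultimately show ?thesis using OK_split_iff[OF t] OK_intro O_add O_mult by metis
next
  case False
  then show ?thesis using OK_nonsplit_iff trace_in_O_if_norm_in_O by blast
qed

end


section \<open>Spinor norms of \<open>O(\<O>\<^sub>K)\<close>\<close>

text \<open>\<open>\<tau>\<^sub>a \<tau>\<^sub>1\<close> is multiplication by \<open>a / a' = a\<^sup>2 / N(a)\<close>, whose spinor norm is \<open>N(a)\<close>.\<close>

definition kalpha :: "'a::field \<Rightarrow> 'a \<times> 'a \<Rightarrow> 'a \<times> 'a" where
  "kalpha d a = ksc (1 / knorm d a) (kmul d a a)"

lemma krefl_krefl_one:
  assumes "knorm d a \<noteq> 0"
  shows "krefl d a (krefl d (1, 0) x) = kmul d (kalpha d a) x"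
proof -
  obtain p q where a: "a = (p, q)" by (cases a)
  obtain r s where x: "x = (r, s)" by (cases x)
  define N where "N = p\<^sup>2 - d * q\<^sup>2"
  have N0: "N \<noteq> 0" using assms by (simp add: N_def a knorm_def)
  have "krefl d (1, 0) x = (-r, s)"
    by (simp add: krefl_def kbil_eq ksc_def x knorm_def)
  moreover have "krefl d a (-r, s) =
      ((r * (p\<^sup>2 + d*q\<^sup>2) + 2*d*p*q*s) / N, (s * (p\<^sup>2 + d*q\<^sup>2) + 2*p*q*r) / N)"
    using N0 unfolding krefl_def kbil_eq ksc_def a
    by (simp add: knorm_def N_def[symmetric] field_simps) (simp add: N_def power2_eq_square algebra_simps)
  moreover have "kmul d (kalpha d a) x =
      ((r * (p\<^sup>2 + d*q\<^sup>2) + 2*d*p*q*s) / N, (s * (p\<^sup>2 + d*q\<^sup>2) + 2*p*q*r) / N)"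
    using N0 unfolding kalpha_def kmul_def ksc_def a x
    by (simp add: knorm_def N_def[symmetric] field_simps) (simp add: power2_eq_square algebra_simps)
  ultimately show ?thesis by simp
qed

lemma knorm_kalpha: "knorm d a \<noteq> 0 \<Longrightarrow> knorm d (kalpha d a) = 1"
  by (simp add: kalpha_def knorm_ksc knorm_kmul power2_eq_square field_simps)

lemma kmul_in_SOV:
  assumes "knorm d a = 1"
  shows "kmul d a \<in> SOV d"
proof -
  have "klinear (kmul d a)"
    unfolding klinear_def by (simp add: kmul_def ksc_def algebra_simps)
  moreover have "bij (kmul d a)"
    by (rule bij_betw_byWitness[where f'="kmul d (kconj a)"]) (auto simp: kmul_kconj_cancel assms)
  moreover have "kdet (kmul d a) = 1"
    using assms by (simp add: kdet_def kmul_def knorm_def power2_eq_square mult.assoc)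
  ultimately show ?thesis by (simp add: SOV_def OV_def knorm_kmul assms)
qed

lemma kmul_image_eq:
  assumes n: "knorm d a = 1" and L1: "\<And>x. x \<in> L \<Longrightarrow> kmul d a x \<in> L"
    and L2: "\<And>x. x \<in> L \<Longrightarrow> kmul d (kconj a) x \<in> L"
  shows "kmul d a ` L = L"
proof
  show "L \<subseteq> kmul d a ` L"
  proof
    fix x assume "x \<in> L"
    then have "kmul d (kconj a) x \<in> L" by (rule L2)
    moreover have "x = kmul d a (kmul d (kconj a) x)" using kmul_kconj_cancel[OF n] by simp
    ultimately show "x \<in> kmul d a ` L" by blast
  qed
qed (use L1 in auto)

lemma knorm_in_spinor_norms:
  assumes N: "knorm d a \<noteq> 0" and G: "kmul d (kalpha d a) \<in> G"
  shows "knorm d a \<in> spinor_norms d G"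
proof -
  have "kmul d (kalpha d a) = foldr (\<lambda>a h. krefl d a \<circ> h) [a, (1,0)] id"
    by (rule ext) (simp add: krefl_krefl_one[OF N])
  moreover have "knorm d a = prod_list (map (knorm d) [a, (1,0)])" by (simp add: knorm_def)
  moreover have "\<forall>b\<in>set [a, (1,0)]. knorm d b \<noteq> 0" using N by (simp add: knorm_def)
  ultimately show ?thesis unfolding spinor_norms_def using G by blast
qed

lemma spinor_norms_mono: "G \<subseteq> H \<Longrightarrow> spinor_norms d G \<subseteq> spinor_norms d H"
  unfolding spinor_norms_def by blast

lemma SOlat_subset_Olat: "SOlat d L \<subseteq> Olat d L"
  unfolding SOlat_def Olat_def SOV_def by blast

lemma spinor_norms_subset_norms: "spinor_norms d G \<subseteq> {knorm d z | z. knorm d z \<noteq> 0}"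
proof
  fix c assume "c \<in> spinor_norms d G"
  then obtain as where as: "\<forall>a\<in>set as. knorm d a \<noteq> 0" and c: "c = prod_list (map (knorm d) as)"
    unfolding spinor_norms_def by blast
  have "prod_list (map (knorm d) as) = knorm d (foldr (kmul d) as (1, 0)) \<and>
      prod_list (map (knorm d) as) \<noteq> 0"
    using as
  proof (induction as)
    case (Cons a as)
    then show ?case by (simp add: knorm_kmul) metis
  qed (simp add: knorm_def)
  then show "c \<in> {knorm d z | z. knorm d z \<noteq> 0}" using c by (metis (mono_tags, lifting) mem_Collect_eq)
qed

text \<open>In the split case every reflection exchanges the two factors of \<open>F \<times> F\<close>,
  rescaling them by mutually inverse factors.\<close>

lemma kemb_krefl:
  assumes dt: "d = t\<^sup>2" and N: "knorm d a \<noteq> 0"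
  shows "kemb t (krefl d a w) = - (kemb t a / kemb (-t) a) * kemb (-t) w"
proof -
  have N': "kemb t a * kemb (-t) a \<noteq> 0" using N knorm_kemb[OF dt] by simp
  have "kemb t (krefl d a w) = kemb t w - kbil d a w / knorm d a * kemb t a"
    using N by (simp add: krefl_def kemb_def ksc_def field_simps)
  also have "\<dots> = - (kemb t a / kemb (-t) a) * kemb (-t) w"
    using N' by (simp add: kbil_kemb[OF dt] knorm_kemb[OF dt] field_simps)
  finally show ?thesis .
qed

lemma reflection_product_split:
  assumes dt: "d = t\<^sup>2" and as: "\<forall>a\<in>set as. knorm d a \<noteq> 0"
  defines "g \<equiv> foldr (\<lambda>a h. krefl d a \<circ> h) as id"
  shows "\<exists>l m. l \<noteq> 0 \<and> m \<noteq> 0 \<and> prod_list (map (knorm d) as) = (-1) ^ length as * l * m\<^sup>2 \<and>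
     ((\<forall>w. kemb t (g w) = l * kemb (-t) w \<and> kemb (-t) (g w) = kemb t w / l) \<or>
      (\<forall>w. kemb t (g w) = l * kemb t w \<and> kemb (-t) (g w) = kemb (-t) w / l))"
  unfolding g_def using as
proof (induction as)
  case Nil
  show ?case by (intro exI[of _ 1]) auto
next
  case (Cons a as)
  define g where "g = foldr (\<lambda>a h. krefl d a \<circ> h) as id"
  have "\<exists>l m. l \<noteq> 0 \<and> m \<noteq> 0 \<and> prod_list (map (knorm d) as) = (-1) ^ length as * l * m\<^sup>2 \<and>
    ((\<forall>w. kemb t (g w) = l * kemb (-t) w \<and> kemb (-t) (g w) = kemb t w / l) \<or>
     (\<forall>w. kemb t (g w) = l * kemb t w \<and> kemb (-t) (g w) = kemb (-t) w / l))"
    unfolding g_def by (rule Cons.IH) (use Cons.prems in simp)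
  then obtain l m where l: "l \<noteq> 0" "m \<noteq> 0"
    and pr: "prod_list (map (knorm d) as) = (-1) ^ length as * l * m\<^sup>2"
    and cases: "(\<forall>w. kemb t (g w) = l * kemb (-t) w \<and> kemb (-t) (g w) = kemb t w / l) \<or>
      (\<forall>w. kemb t (g w) = l * kemb t w \<and> kemb (-t) (g w) = kemb (-t) w / l)"
    by blast
  have Na: "knorm d a \<noteq> 0" using Cons by simp
  define x0 where "x0 = kemb t a"
  define y0 where "y0 = kemb (-t) a"
  have xy: "x0 \<noteq> 0" "y0 \<noteq> 0" "knorm d a = x0 * y0"
    using Na knorm_kemb[OF dt, of a] by (auto simp: x0_def y0_def)
  have r1: "kemb t (krefl d a w) = - (x0 / y0) * kemb (-t) w" for w
    using kemb_krefl[OF dt Na] by (simp add: x0_def y0_def)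
  have r2: "kemb (-t) (krefl d a w) = - (y0 / x0) * kemb t w" for w
    using kemb_krefl[of d "-t", OF _ Na] dt by (simp add: x0_def y0_def)
  define l' where "l' = - (x0 / (y0 * l))"
  define m' where "m' = y0 * l * m"
  have l'0: "l' \<noteq> 0" "m' \<noteq> 0" using xy l by (auto simp: l'_def m'_def)
  have pr': "prod_list (map (knorm d) (a # as)) = (-1) ^ length (a # as) * l' * m'\<^sup>2"
    using xy l by (simp add: pr l'_def m'_def power2_eq_square field_simps)
  have fo: "foldr (\<lambda>a h. krefl d a \<circ> h) (a # as) id = krefl d a \<circ> g" by (simp add: g_def)
  from cases show ?case
  proof
    assume c: "\<forall>w. kemb t (g w) = l * kemb (-t) w \<and> kemb (-t) (g w) = kemb t w / l"
    have "\<forall>w. kemb t ((krefl d a \<circ> g) w) = l' * kemb t w \<and>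
        kemb (-t) ((krefl d a \<circ> g) w) = kemb (-t) w / l'"
      using c xy l by (simp add: r1 r2 l'_def field_simps)
    then show ?thesis using l'0 pr' fo by metis
  next
    assume c: "\<forall>w. kemb t (g w) = l * kemb t w \<and> kemb (-t) (g w) = kemb (-t) w / l"
    have "\<forall>w. kemb t ((krefl d a \<circ> g) w) = l' * kemb (-t) w \<and>
        kemb (-t) ((krefl d a \<circ> g) w) = kemb t w / l'"
      using c xy l by (simp add: r1 r2 l'_def field_simps)
    then show ?thesis using l'0 pr' fo by metis
  qed
qed

context quadratic_local
begin

lemma norms_subset_spinor_norms_SOlat:
  assumes nsq: "\<nexists>t. d = t\<^sup>2"
  shows "{knorm d z | z. knorm d z \<noteq> 0} \<subseteq> spinor_norms d (SOlat d (OK d v))"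
proof
  fix c assume "c \<in> {knorm d z | z. knorm d z \<noteq> 0}"
  then obtain z where c: "c = knorm d z" and N: "knorm d z \<noteq> 0" by blast
  have n1: "knorm d (kalpha d z) = 1" using knorm_kalpha[OF N] .
  have "kmul d (kalpha d z) ` OK d v = OK d v"
    by (rule kmul_image_eq[OF n1]) (simp_all add: OK_nonsplit_iff[OF nsq] knorm_kmul n1)
  then have "kmul d (kalpha d z) \<in> SOlat d (OK d v)" using kmul_in_SOV[OF n1] by (simp add: SOlat_def)
  then show "c \<in> spinor_norms d (SOlat d (OK d v))" using knorm_in_spinor_norms[OF N] c by simp
qed

lemma unit_squares_subset_spinor_norms_SOlat:
  assumes dt: "d = t\<^sup>2"
  shows "{u * s\<^sup>2 | u s. u \<in> vunits v \<and> s \<noteq> 0} \<subseteq> spinor_norms d (SOlat d (OK d v))"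
proof
  fix c assume "c \<in> {u * s\<^sup>2 | u s. u \<in> vunits v \<and> s \<noteq> 0}"
  then obtain u s where c: "c = u * s\<^sup>2" and u: "u \<noteq> 0" "v u = 0" and s: "s \<noteq> 0"
    by (auto simp: vunits_def)
  have t0: "t \<noteq> 0" using d_nonzero dt by auto
  have dt': "d = (-t)\<^sup>2" using dt by simp
  define a where "a = ((u*s + s) / 2, (u*s - s) / (2*t))"
  have ka: "kemb t a = u * s" "kemb (-t) a = s"
    using two_nonzero t0 four_nonzero by (simp_all add: a_def kemb_def field_simps)
  have Na: "knorm d a = u * s\<^sup>2" using knorm_kemb[OF dt, of a] ka by (simp add: power2_eq_square)
  then have N: "knorm d a \<noteq> 0" using u s by simp
  define \<alpha> where "\<alpha> = kalpha d a"
  have n1: "knorm d \<alpha> = 1" using knorm_kalpha[OF N] by (simp add: \<alpha>_def)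
  have k\<alpha>: "kemb t \<alpha> = u" "kemb (-t) \<alpha> = inverse u"
    using u s unfolding \<alpha>_def kalpha_def
    by (simp_all add: kemb_ksc kemb_kmul[OF dt] kemb_kmul[OF dt'] ka Na field_simps power2_eq_square)
  have uO: "u \<in> Ov" "inverse u \<in> Ov" using u by (simp_all add: vring_def v_inverse)
  have "kmul d \<alpha> ` OK d v = OK d v"
  proof (rule kmul_image_eq[OF n1])
    fix x assume "x \<in> OK d v"
    then have x: "kemb t x \<in> Ov" "kemb (-t) x \<in> Ov" using OK_split_iff[OF dt] by auto
    show "kmul d \<alpha> x \<in> OK d v" "kmul d (kconj \<alpha>) x \<in> OK d v"
      unfolding OK_split_iff[OF dt] using x uO
      by (simp_all add: kemb_kmul[OF dt] kemb_kmul[OF dt'] kemb_kconj k\<alpha> O_mult)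
  qed
  then have "kmul d \<alpha> \<in> SOlat d (OK d v)" using kmul_in_SOV[OF n1] by (simp add: SOlat_def)
  then show "c \<in> spinor_norms d (SOlat d (OK d v))"
    using knorm_in_spinor_norms[OF N] c Na by (simp add: \<alpha>_def)
qed

lemma spinor_norms_Olat_subset_unit_squares:
  assumes dt: "d = t\<^sup>2"
  shows "spinor_norms d (Olat d (OK d v)) \<subseteq> {u * s\<^sup>2 | u s. u \<in> vunits v \<and> s \<noteq> 0}"
proof
  fix c assume "c \<in> spinor_norms d (Olat d (OK d v))"
  then obtain g as where g: "g \<in> Olat d (OK d v)" and as: "\<forall>a\<in>set as. knorm d a \<noteq> 0"
    and gf: "g = foldr (\<lambda>a h. krefl d a \<circ> h) as id" and c: "c = prod_list (map (knorm d) as)"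
    unfolding spinor_norms_def by blast
  have t0: "t \<noteq> 0" using d_nonzero dt by auto
  obtain l m where l: "l \<noteq> 0" "m \<noteq> 0" and pr: "c = (-1) ^ length as * l * m\<^sup>2"
    and cases: "(\<forall>w. kemb t (g w) = l * kemb (-t) w \<and> kemb (-t) (g w) = kemb t w / l) \<or>
      (\<forall>w. kemb t (g w) = l * kemb t w \<and> kemb (-t) (g w) = kemb (-t) w / l)"
    using reflection_product_split[OF dt as] gf c by metis
  define ep where "ep = (1/2::'a, 1/(2*t))"
  define em where "em = (1/2::'a, - 1/(2*t))"
  have ke: "kemb t ep = 1" "kemb (-t) ep = 0" "kemb t em = 0" "kemb (-t) em = 1"
    using two_nonzero t0 by (simp_all add: ep_def em_def kemb_def field_simps)
  have "ep \<in> OK d v" "em \<in> OK d v" using OK_split_iff[OF dt] ke by auto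
  then have gO: "g ep \<in> OK d v" "g em \<in> OK d v" using g by (auto simp: Olat_def)
  from cases have "l \<in> Ov \<and> inverse l \<in> Ov"
  proof
    assume c: "\<forall>w. kemb t (g w) = l * kemb (-t) w \<and> kemb (-t) (g w) = kemb t w / l"
    show ?thesis using c[rule_format, of em] c[rule_format, of ep] gO OK_split_iff[OF dt] ke
      by (auto simp: divide_inverse)
  next
    assume c: "\<forall>w. kemb t (g w) = l * kemb t w \<and> kemb (-t) (g w) = kemb (-t) w / l"
    show ?thesis using c[rule_format, of em] c[rule_format, of ep] gO OK_split_iff[OF dt] ke
      by (auto simp: divide_inverse)
  qed
  then have "v l = 0" using l by (simp add: vring_def v_inverse)
  then have "(-1) ^ length as * l \<in> vunits v"
    using l v_power[of "-1::'a" "length as"] by (simp add: vunits_def v_mult)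
  then show "c \<in> {u * s\<^sup>2 | u s. u \<in> vunits v \<and> s \<noteq> 0}" using pr l by blast
qed

lemma spinor_norms_OK:
  "spinor_norms d (Olat d (OK d v)) = spinor_norms d (SOlat d (OK d v)) \<and>
    ((\<nexists>t. d = t\<^sup>2) \<longrightarrow>
       spinor_norms d (Olat d (OK d v)) = {knorm d z | z. knorm d z \<noteq> 0}) \<and>
    ((\<exists>t. d = t\<^sup>2) \<longrightarrow>
       spinor_norms d (Olat d (OK d v)) = {u * t\<^sup>2 | u t. u \<in> vunits v \<and> t \<noteq> 0})"
proof -
  have SO: "spinor_norms d (SOlat d (OK d v)) \<subseteq> spinor_norms d (Olat d (OK d v))"
    by (rule spinor_norms_mono[OF SOlat_subset_Olat])
  show ?thesis
  proof (cases "\<exists>t. d = t\<^sup>2")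
    case True
    then obtain t where t: "d = t\<^sup>2" by blast
    show ?thesis
      using spinor_norms_Olat_subset_unit_squares[OF t] unit_squares_subset_spinor_norms_SOlat[OF t]
        SO True by blast
  next
    case False
    show ?thesis
      using spinor_norms_subset_norms norms_subset_spinor_norms_SOlat[OF False] SO False by blast
  qed
qed

end


section \<open>The discriminant module of \<open>\<O>\<^sub>K\<close>\<close>

context quadratic_local
begin

abbreviation LL where "LL \<equiv> OK d v"
abbreviation DD where "DD \<equiv> dual_lattice d v (OK d v)"

lemma OK_kbil: "x \<in> LL \<Longrightarrow> y \<in> LL \<Longrightarrow> kbil d x y \<in> Ov"
proof (cases "\<exists>t. d = t\<^sup>2")
  case True
  then obtain t where t: "d = t\<^sup>2" by blast
  assume "x \<in> LL" "y \<in> LL"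
  then show ?thesis using OK_split_iff[OF t] kbil_kemb[OF t] by (auto intro!: O_add O_mult)
next
  case False
  assume "x \<in> LL" "y \<in> LL"
  then show ?thesis using vc_kbil[OF False, of 0 x y] OK_nonsplit_iff[OF False] by (simp add: Ov_iff_vc)
qed

lemma OK_add: "x \<in> LL \<Longrightarrow> y \<in> LL \<Longrightarrow> x + y \<in> LL"
  using OK_kbil[of x y] unfolding OK_iff_trace_norm knorm_add
  by (metis O_add distrib_left fst_add)

lemma OK_ksc: "c \<in> Ov \<Longrightarrow> x \<in> LL \<Longrightarrow> ksc c x \<in> LL"
  unfolding OK_iff_trace_norm knorm_ksc
  by (metis O_mult O_power fst_conv ksc_def mult.left_commute)

lemma OK_uminus: "x \<in> LL \<Longrightarrow> - x \<in> LL"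
  unfolding OK_iff_trace_norm by simp

lemma OK_diff: "x \<in> LL \<Longrightarrow> y \<in> LL \<Longrightarrow> x - y \<in> LL"
  using OK_add[of x "- y"] OK_uminus by simp

lemma OK_subset_dual: "x \<in> LL \<Longrightarrow> x \<in> DD"
  unfolding dual_lattice_def using OK_kbil by blast

lemma dual_add: "x \<in> DD \<Longrightarrow> y \<in> DD \<Longrightarrow> x + y \<in> DD"
  unfolding dual_lattice_def by (auto simp: kbil_add_left intro: O_add)

lemma dual_ksc: "c \<in> Ov \<Longrightarrow> x \<in> DD \<Longrightarrow> ksc c x \<in> DD"
  unfolding dual_lattice_def by (auto simp: kbil_ksc_left intro: O_mult)

lemma knorm_add_OK_diff:
  assumes x: "x \<in> DD" and l: "l \<in> LL"
  shows "knorm d (x + l) - knorm d x \<in> Ov"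
proof -
  have "kbil d x l \<in> Ov" using x l by (simp add: dual_lattice_def)
  moreover have "knorm d l \<in> Ov" using l by (simp add: OK_iff_trace_norm)
  ultimately show ?thesis by (simp add: knorm_add O_add)
qed

lemma id_in_SOlat: "id \<in> SOlat d LL"
  by (simp add: SOlat_def SOV_def OV_def klinear_def kdet_def)

lemma uminus_in_SOlat: "uminus \<in> SOlat d LL"
proof -
  have "uminus ` LL = LL"
    using OK_uminus by (auto intro: image_eqI[where x = "- x" for x])
  then show ?thesis
    by (simp add: SOlat_def SOV_def OV_def klinear_def ksc_def kdet_def bij_uminus knorm_def)
qed

lemma dual_lattice_coords:
  assumes s: "s \<noteq> 0" and dd: "d = d0 * s\<^sup>2"
    and coords: "\<And>z. z \<in> LL \<longleftrightarrow> fst z \<in> Ov \<and> snd z * s \<in> Ov"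
  shows "x \<in> DD \<longleftrightarrow> 2 * fst x \<in> Ov \<and> 2 * d0 * s * snd x \<in> Ov"
proof -
  have bil: "kbil d x l = 2 * fst x * fst l - 2 * d0 * s * snd x * (snd l * s)" for l
    by (simp add: kbil_eq dd power2_eq_square algebra_simps)
  show ?thesis
  proof
    assume x: "x \<in> DD"
    have "(1, 0) \<in> LL" "(0, 1 / s) \<in> LL" using s by (simp_all add: coords)
    then have "kbil d x (1, 0) \<in> Ov" "kbil d x (0, 1 / s) \<in> Ov"
      using x unfolding dual_lattice_def by blast+
    then show "2 * fst x \<in> Ov \<and> 2 * d0 * s * snd x \<in> Ov"
      using s by (simp add: bil)
  next
    assume x: "2 * fst x \<in> Ov \<and> 2 * d0 * s * snd x \<in> Ov"
    show "x \<in> DD" unfolding dual_lattice_def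
    proof (intro CollectI ballI)
      fix l assume "l \<in> LL"
      then have "fst l \<in> Ov" "snd l * s \<in> Ov" by (simp_all add: coords)
      then show "kbil d x l \<in> Ov" unfolding bil using x by (simp add: O_diff O_mult)
    qed
  qed
qed

context
  fixes f assumes f: "disc_isometry d v LL f"
begin

lemma disc_isometry_dual: "x \<in> DD \<Longrightarrow> f x \<in> DD"
  using f unfolding disc_isometry_def by blast

lemma disc_isometry_add: "x \<in> DD \<Longrightarrow> y \<in> DD \<Longrightarrow> f (x + y) - f x - f y \<in> LL"
  using f unfolding disc_isometry_def by blast

lemma disc_isometry_ksc: "c \<in> Ov \<Longrightarrow> x \<in> DD \<Longrightarrow> f (ksc c x) - ksc c (f x) \<in> LL"
  using f unfolding disc_isometry_def by blast

lemma disc_isometry_cong: "x \<in> DD \<Longrightarrow> y \<in> DD \<Longrightarrow> x - y \<in> LL \<Longrightarrow> f x - f y \<in> LL"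
  using f unfolding disc_isometry_def by blast

lemma disc_isometry_inj: "x \<in> DD \<Longrightarrow> y \<in> DD \<Longrightarrow> f x - f y \<in> LL \<Longrightarrow> x - y \<in> LL"
  using f unfolding disc_isometry_def by blast

lemma disc_isometry_knorm: "x \<in> DD \<Longrightarrow> knorm d (f x) - knorm d x \<in> Ov"
  using f unfolding disc_isometry_def by blast

lemma disc_isometry_OK: "x \<in> LL \<Longrightarrow> f x \<in> LL"
proof -
  assume x: "x \<in> LL"
  have z: "0 \<in> DD" using OK_subset_dual[of 0] by (simp add: OK_iff_trace_norm)
  have "f (0 + 0) - f 0 - f 0 \<in> LL" using disc_isometry_add[OF z z] .
  then have f0: "f 0 \<in> LL" using OK_uminus[of "- f 0"] by simp
  have "f x - f 0 \<in> LL" using disc_isometry_cong[OF OK_subset_dual[OF x] z] x by simp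
  then show ?thesis using OK_add[OF _ f0] by (metis diff_add_cancel)
qed

lemma disc_isometry_kbil: "x \<in> DD \<Longrightarrow> y \<in> DD \<Longrightarrow> kbil d (f x) (f y) - kbil d x y \<in> Ov"
proof -
  assume x: "x \<in> DD" and y: "y \<in> DD"
  define l where "l = f (x + y) - f x - f y"
  have l: "l \<in> LL" using disc_isometry_add[OF x y] by (simp add: l_def)
  have fxy: "f x + f y \<in> DD" using dual_add disc_isometry_dual x y by blast
  have "knorm d (f x + f y + l) - knorm d (f x + f y) \<in> Ov" using knorm_add_OK_diff[OF fxy l] .
  moreover have "knorm d (f (x + y)) - knorm d (x + y) \<in> Ov"
    using disc_isometry_knorm dual_add x y by blast
  moreover have "knorm d (f x) - knorm d x \<in> Ov" "knorm d (f y) - knorm d y \<in> Ov"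
    using disc_isometry_knorm x y by blast+
  moreover have "kbil d (f x) (f y) - kbil d x y =
     (knorm d (f (x + y)) - knorm d (x + y)) - (knorm d (f x + f y + l) - knorm d (f x + f y))
     - (knorm d (f x) - knorm d x) - (knorm d (f y) - knorm d y)"
    by (simp add: kbil_def l_def)
  ultimately show ?thesis by (simp add: O_diff)
qed

lemma disc_isometry_lift_from_basis:
  assumes e1: "e1 \<in> DD" and e2: "e2 \<in> DD"
    and span: "\<And>x. x \<in> DD \<Longrightarrow> \<exists>A B. A \<in> Ov \<and> B \<in> Ov \<and> x = ksc A e1 + ksc B e2"
    and g: "g \<in> SOlat d LL" and g1: "f e1 - g e1 \<in> LL" and g2: "f e2 - g e2 \<in> LL"
  shows "\<exists>g\<in>SOlat d LL. \<forall>x\<in>DD. g x - f x \<in> LL"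
proof (intro bexI[OF _ g] ballI)
  fix x assume x: "x \<in> DD"
  obtain A B where AB: "A \<in> Ov" "B \<in> Ov" and xe: "x = ksc A e1 + ksc B e2"
    using span[OF x] by blast
  have Ae1: "ksc A e1 \<in> DD" and Be2: "ksc B e2 \<in> DD" using dual_ksc AB e1 e2 by auto
  have "klinear g" using g by (simp add: SOlat_def SOV_def OV_def)
  then have gx: "g x = ksc A (g e1) + ksc B (g e2)" unfolding klinear_def xe by metis
  have ksc_diff: "ksc c u - ksc c w = ksc c (u - w)" for c u w
    by (simp add: ksc_def algebra_simps)
  have "f x - g x = (f x - f (ksc A e1) - f (ksc B e2)) + (f (ksc A e1) - ksc A (f e1))
     + (f (ksc B e2) - ksc B (f e2)) + ksc A (f e1 - g e1) + ksc B (f e2 - g e2)"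
    unfolding gx ksc_diff[symmetric] by (simp add: algebra_simps)
  also have "\<dots> \<in> LL"
    using disc_isometry_add[OF Ae1 Be2] disc_isometry_ksc[OF AB(1) e1]
      disc_isometry_ksc[OF AB(2) e2] OK_ksc[OF AB(1) g1] OK_ksc[OF AB(2) g2]
    unfolding xe[symmetric] by (meson OK_add)
  finally show "g x - f x \<in> LL" using OK_uminus by fastforce
qed

lemma disc_isometry_lift_if_dual_eq:
  assumes "DD \<subseteq> LL"
  shows "\<exists>g\<in>SOlat d LL. \<forall>x\<in>DD. g x - f x \<in> LL"
  using assms disc_isometry_dual id_in_SOlat OK_diff by (metis id_apply subsetD)

end

end


section \<open>Lifting isometries of the discriminant module\<close>

context quadratic_local
begin

text \<open>If \<open>d\<^sub>0 \<equiv> 1 mod 4\<close>, then \<open>\<O>\<^sub>K = \<O>\<^sub>F[(1 + \<surd>d\<^sub>0)/2]\<close> is unimodular.\<close>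

lemma dual_subset_OK_if_1mod4:
  assumes s: "s \<noteq> 0" and dd: "d = d0 * s\<^sup>2" and vd0: "v d0 = 0" and q: "(d0 - 1) / 4 \<in> Ov"
  shows "DD \<subseteq> LL"
proof
  fix x assume x: "x \<in> DD"
  have d00: "d0 \<noteq> 0" using d_nonzero dd by auto
  define w where "w = (1/2 :: 'a, 1 / (2 * s))"
  have "knorm d w = - ((d0 - 1) / 4)"
    using s two_nonzero four_nonzero by (simp add: w_def knorm_def dd field_simps power2_eq_square)
  then have "w \<in> LL" unfolding OK_iff_trace_norm using q two_nonzero by (simp add: w_def)
  moreover have "(1, 0) \<in> LL" unfolding OK_iff_trace_norm by (simp add: knorm_def)
  ultimately have "kbil d x (1, 0) \<in> Ov" "kbil d x w \<in> Ov"
    using x unfolding dual_lattice_def by blast+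
  moreover have "kbil d x (1, 0) = 2 * fst x" by (simp add: kbil_eq)
  moreover have "kbil d x w = fst x - d0 * s * snd x"
    using s two_nonzero by (simp add: kbil_eq w_def dd field_simps power2_eq_square)
  moreover define r where "r = fst x - d0 * s * snd x"
  ultimately have A: "2 * fst x \<in> Ov" and r: "r \<in> Ov" by simp_all
  have "knorm d x = ((d0 - 1) / 4 * (2 * fst x)\<^sup>2 + (2 * fst x) * r - r\<^sup>2) / d0"
    using d00 s two_nonzero four_nonzero by (simp add: knorm_def r_def dd field_simps power2_eq_square)
  moreover have "(d0 - 1) / 4 * B\<^sup>2 + B * r - r\<^sup>2 \<in> Ov" if "B \<in> Ov" for B
    using q that r by (intro O_add O_diff O_mult O_power)
  then have "(d0 - 1) / 4 * (2 * fst x)\<^sup>2 + (2 * fst x) * r - r\<^sup>2 \<in> Ov"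
    using A by blast
  ultimately have "knorm d x \<in> Ov" using O_divide_unit d00 vd0 by simp
  then show "x \<in> LL" using A unfolding OK_iff_trace_norm by simp
qed

lemma O_of_norm_ramified:
  assumes d00: "d0 \<noteq> 0" and vd0: "v d0 = 1" and N: "a\<^sup>2 - d0 * b\<^sup>2 \<in> Ov"
  shows "a \<in> Ov \<and> b \<in> Ov"
proof -
  have aO: "a \<in> Ov"
  proof (rule ccontr)
    assume "a \<notin> Ov"
    then have a0: "a \<noteq> 0" and va: "v a < 0" by (auto simp: vring_def)
    show False
    proof (cases "b = 0")
      case True
      then show False using N a0 va by (simp add: vring_def v_power2)
    next
      case False
      have "v (a\<^sup>2) \<noteq> v (- (d0 * b\<^sup>2))"
        using a0 False d00 vd0 by (simp add: v_power2 v_mult) presburger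
      from v_add_neq[OF _ _ this] a0 False d00
      have "v (a\<^sup>2 - d0 * b\<^sup>2) = min (v (a\<^sup>2)) (v (- (d0 * b\<^sup>2)))" "a\<^sup>2 - d0 * b\<^sup>2 \<noteq> 0"
        by auto
      then show False using N va a0 by (simp add: vring_def v_power2)
    qed
  qed
  moreover have "b \<in> Ov"
  proof (cases "b = 0")
    case False
    have "d0 * b\<^sup>2 = a\<^sup>2 - (a\<^sup>2 - d0 * b\<^sup>2)" by simp
    then have "d0 * b\<^sup>2 \<in> Ov" using aO N O_diff O_power by metis
    then show ?thesis using False d00 vd0 by (simp add: vring_def v_mult v_power2)
  qed simp
  ultimately show ?thesis by simp
qed

lemma OK_coords_ramified:
  assumes s: "s \<noteq> 0" and dd: "d = d0 * s\<^sup>2" and vd0: "v d0 = 1"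
  shows "z \<in> LL \<longleftrightarrow> fst z \<in> Ov \<and> snd z * s \<in> Ov"
proof -
  have d00: "d0 \<noteq> 0" using d_nonzero dd by auto
  have d0O: "d0 \<in> Ov" using vd0 by (simp add: vring_def)
  have kn: "knorm d z = (fst z)\<^sup>2 - d0 * (snd z * s)\<^sup>2"
    by (simp add: knorm_def dd power2_eq_square algebra_simps)
  show ?thesis
    using O_of_norm_ramified[OF d00 vd0] d0O unfolding OK_iff_trace_norm kn
    by (metis O_mult O_numeral O_diff O_power)
qed

end

locale quadratic_padic = quadratic_local +
  fixes p :: nat
  assumes prime: "prime p" and char_0: "\<forall>n::nat. n > 0 \<longrightarrow> (of_nat n :: 'a) \<noteq> 0"
    and v_p: "v (of_nat p) = 1" and card_residue_field: "card (residue_classes v) = p"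
begin

lemma v_two_eq_zero: "p \<noteq> 2 \<Longrightarrow> v 2 = 0"
proof (rule ccontr)
  assume p2: "p \<noteq> 2" and "v 2 \<noteq> 0"
  then have v21: "vc 1 (2::'a)" using v_two_nonneg two_nonzero by (simp add: vclose_def)
  have "p > 2" using prime p2 prime_ge_2_nat[of p] by linarith
  then have "odd p" using prime prime_odd_nat by blast
  then obtain k where k: "p = 2 * k + 1" by (metis oddE)
  have "(1::'a) = of_nat p - 2 * of_nat k" by (simp add: k)
  moreover have "vc 1 (of_nat p :: 'a)"
    using char_0 v_p prime_gt_0_nat[OF prime] by (simp add: vclose_def)
  moreover have "vc (1 + 0) (2 * of_nat k :: 'a)"
    by (rule vc_mult[OF v21]) (simp add: Ov_iff_vc[symmetric])
  ultimately have "vc 1 (1::'a)" using vc_diff by fastforce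
  then show False by (simp add: vclose_def)
qed

lemma v_two_eq_one: "p = 2 \<Longrightarrow> v 2 = 1"
  using v_p by simp

lemma vc_half: "p = 2 \<Longrightarrow> vc (k + 1) x \<Longrightarrow> vc k (x / 2)"
  using vc_divide[of "k + 1" x 2] two_nonzero v_two_eq_one by simp

lemma dyadic_residue_cases:
  assumes p2: "p = 2" and x: "x \<in> Ov"
  shows "vc 1 x \<or> vc 1 (x - 1)"
proof (rule ccontr)
  assume h: "\<not> (vc 1 x \<or> vc 1 (x - 1))"
  define C where "C = (\<lambda>x. {y \<in> vring v. x - y \<in> vmax v})"
  have fin: "finite (residue_classes v)" using card_residue_field p2 by (metis card.infinite zero_neq_numeral)
  have "1 \<in> C 1" "1 \<notin> C 0" by (simp_all add: C_def vmax_iff_vc vclose_def)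
  then have c01: "C 0 \<noteq> C 1" by blast
  have "x \<in> C x" "x \<notin> C 0" "x \<notin> C 1" using x h
    by (simp_all add: C_def vmax_iff_vc) (metis vc_commute_diff)
  then have "C x \<noteq> C 0" "C x \<noteq> C 1" by blast+
  then have "card {C 0, C 1, C x} = 3" using c01 by simp
  moreover have "{C 0, C 1, C x} \<subseteq> residue_classes v"
    unfolding residue_classes_def C_def[symmetric] using x by auto
  ultimately have "3 \<le> card (residue_classes v)" using fin by (metis card_mono)
  then show False using card_residue_field p2 by simp
qed

lemma dyadic_unit_congruences:
  assumes p2: "p = 2" and u: "u \<in> Ov" "\<not> vc 1 u"
  shows "vc 1 (u - 1)" "vc 1 (u + 1)" "vc 3 (u\<^sup>2 - 1)" "vc 2 (u - 1) \<or> vc 2 (u + 1)"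
proof -
  have v21: "vc 1 (2::'a)" using v_two_eq_one[OF p2] two_nonzero by (simp add: vclose_def)
  show u1: "vc 1 (u - 1)" using dyadic_residue_cases[OF p2 u(1)] u(2) by simp
  have "u + 1 = (u - 1) + 2" by simp
  then show "vc 1 (u + 1)" using vc_add[OF u1 v21] by metis
  define m where "m = (u - 1) / 2"
  have mO: "m \<in> Ov" unfolding m_def using vc_half[OF p2, of 0] u1 by (simp add: Ov_iff_vc)
  have um: "u = 2 * m + 1" using two_nonzero by (simp add: m_def field_simps)
  have mm: "vc 1 m \<or> vc 1 (m + 1)"
  proof (cases "vc 1 m")
    case False
    then have "vc 1 (m - 1)" using dyadic_residue_cases[OF p2 mO] by simp
    then have "vc 1 ((m - 1) + 2)" using vc_add v21 by blast
    then show ?thesis by (simp add: add.commute add_diff_eq)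
  qed simp
  text \<open>\<open>u\<^sup>2 - 1 = 4 m (m + 1)\<close>, and one of \<open>m\<close>, \<open>m + 1\<close> is even.\<close>
  have "vc 1 (m * (m + 1))"
    using mm vc_mult[of 1 m 0 "m + 1"] vc_mult[of 0 m 1 "m + 1"] mO O_add[OF mO O_one]
    by (auto simp: Ov_iff_vc)
  moreover have "vc 2 (4::'a)" using vc_mult[OF v21 v21] by simp
  ultimately have "vc (2 + 1) (4 * (m * (m + 1)))" using vc_mult[of 2 4 1] by blast
  moreover have "u\<^sup>2 - 1 = 4 * (m * (m + 1))" by (simp add: um power2_eq_square algebra_simps)
  ultimately show "vc 3 (u\<^sup>2 - 1)" by simp
  have e: "u - 1 = 2 * m" "u + 1 = 2 * (m + 1)" by (simp_all add: um)
  have "vc 2 (2 * m) \<or> vc 2 (2 * (m + 1))"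
    using mm vc_mult[OF v21, of 1 m] vc_mult[OF v21, of 1 "m + 1"] by auto
  then show "vc 2 (u - 1) \<or> vc 2 (u + 1)" unfolding e .
qed

end


context quadratic_padic
begin

text \<open>In the ramified case the dual lattice is spanned by \<open>e\<^sub>1 = 1/2\<close> and
  \<open>e\<^sub>2 = 1 / (2\<surd>d\<^sub>0)\<close>; writing \<open>f e\<^sub>i\<close> in coordinates \<open>A\<^sub>i, B\<^sub>i\<close> on this basis, the
  hypotheses below say that \<open>f\<close> preserves \<open>N(e\<^sub>1)\<close>, \<open>N(e\<^sub>2)\<close> and \<open>\<langle>e\<^sub>1, e\<^sub>2\<rangle>\<close> modulo \<open>\<O>\<^sub>F\<close>.\<close>

lemma ramified_sign_odd:
  assumes p2: "p \<noteq> 2" and d00: "d0 \<noteq> 0" and vd0: "v d0 = 1"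
    and A2: "A2 \<in> Ov" and B2: "B2 \<in> Ov"
    and N2: "A2\<^sup>2 / 4 - B2\<^sup>2 / (4 * d0) + 1 / (4 * d0) \<in> Ov"
  shows "(B2 - 1) / (2 * d0) \<in> Ov \<or> (B2 + 1) / (2 * d0) \<in> Ov"
proof -
  have v2: "v 2 = 0" using v_two_eq_zero[OF p2] .
  have v4: "v (4::'a) = 0" using v_mult[of 2 2] two_nonzero v2 by simp
  have "(1 - B2\<^sup>2) / (4 * d0) = (A2\<^sup>2 / 4 - B2\<^sup>2 / (4 * d0) + 1 / (4 * d0)) - A2\<^sup>2 / 4"
    by (simp add: diff_divide_distrib)
  also have "\<dots> \<in> Ov" using O_diff[OF N2 O_divide_unit[OF O_power[OF A2] four_nonzero v4]] .
  finally have "vc 1 (1 - B2\<^sup>2)"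
    by (rule vc_of_O_divide) (use v_mult[of 4 d0] v4 four_nonzero d00 vd0 in \<open>simp_all add: vclose_def\<close>)
  then have "vc 1 ((1 - B2) * (1 + B2))" by (simp add: power2_eq_square algebra_simps)
  then have "vc 1 (B2 - 1) \<or> vc 1 (B2 + 1)"
    using vc_mult_cases[OF O_diff[OF O_one B2] O_add[OF O_one B2]]
    by (auto simp: vc_commute_diff add.commute)
  moreover have "v (2 * d0) = 1" using v_mult[of 2 d0] two_nonzero d00 vd0 v2 by simp
  ultimately show ?thesis using O_divide_vc two_nonzero d00 by (metis mult_eq_0_iff order_refl)
qed

lemma ramified_dyadic_e2:
  assumes p2: "p = 2" and d00: "d0 \<noteq> 0" and vd0: "v d0 = 1"
    and A2: "A2 \<in> Ov" and B2: "B2 \<in> Ov"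
    and N2: "A2\<^sup>2 / 4 - B2\<^sup>2 / (4 * d0) + 1 / (4 * d0) \<in> Ov"
  shows "vc 1 A2" "\<not> vc 1 B2"
proof -
  have v4d: "v (4 * d0) = 3"
    using v_mult[of 2 2] v_mult[of 4 d0] two_nonzero four_nonzero d00 vd0 v_two_eq_one[OF p2] by simp
  define X where "X = d0 * A2\<^sup>2 + 1 - B2\<^sup>2"
  have "X / (4 * d0) = A2\<^sup>2 / 4 - B2\<^sup>2 / (4 * d0) + 1 / (4 * d0)"
    using four_nonzero d00 by (simp add: X_def field_simps)
  then have "X / (4 * d0) \<in> Ov" using N2 by simp
  then have X3: "vc 3 X"
    by (rule vc_of_O_divide) (use four_nonzero d00 v4d in \<open>simp_all add: vclose_def\<close>)
  have d01: "vc 1 d0" using vd0 by (simp add: vclose_def)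
  have A2sq: "vc 0 (A2\<^sup>2)" using O_power[OF A2] by (simp add: Ov_iff_vc)
  show B2u: "\<not> vc 1 B2"
  proof
    assume "vc 1 B2"
    then have "vc 1 (B2\<^sup>2)" using vc_mult[of 1 B2 1 B2] by (simp add: power2_eq_square vc_mono)
    then have "vc 1 (d0 * A2\<^sup>2 - B2\<^sup>2)" using vc_diff vc_mult[OF d01 A2sq] by simp
    then have "vc 1 (X - (d0 * A2\<^sup>2 - B2\<^sup>2))" using vc_diff vc_mono[OF X3] by simp
    then show False by (simp add: X_def vclose_def)
  qed
  have "d0 * A2\<^sup>2 = X + (B2\<^sup>2 - 1)" by (simp add: X_def)
  then have "vc 3 (d0 * A2\<^sup>2)"
    using vc_add[OF X3 dyadic_unit_congruences(3)[OF p2 B2 B2u]] by simp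
  then show "vc 1 A2"
    using d00 vd0 by (cases "A2 = 0") (auto simp: vclose_def v_mult v_power2)
qed

lemma ramified_dyadic_signs:
  assumes p2: "p = 2" and d00: "d0 \<noteq> 0" and vd0: "v d0 = 1"
    and AB: "A1 \<in> Ov" "B1 \<in> Ov" "A2 \<in> Ov" "B2 \<in> Ov"
    and N1: "A1\<^sup>2 / 4 - B1\<^sup>2 / (4 * d0) - 1 / 4 \<in> Ov"
    and N2: "A2\<^sup>2 / 4 - B2\<^sup>2 / (4 * d0) + 1 / (4 * d0) \<in> Ov"
    and Bil: "A1 * A2 / 2 - B1 * B2 / (2 * d0) \<in> Ov"
  shows "A2 / 2 \<in> Ov" "B1 / (2 * d0) \<in> Ov" "(A1 - 1) / 2 \<in> Ov" "(A1 + 1) / 2 \<in> Ov"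
    "(B2 - 1) / (2 * d0) \<in> Ov \<or> (B2 + 1) / (2 * d0) \<in> Ov"
proof -
  have v2: "v 2 = 1" using v_two_eq_one[OF p2] .
  have v4: "v (4::'a) = 2" using v_mult[of 2 2] two_nonzero v2 by simp
  have v2d: "v (2 * d0) = 2" using v_mult[of 2 d0] two_nonzero d00 vd0 v2 by simp
  have v4d: "v (4 * d0) = 3" using v_mult[of 4 d0] four_nonzero d00 vd0 v4 by simp
  have half: "y / 2 \<in> Ov" if "vc 1 y" for y using vc_half[OF p2, of 0 y] that by (simp add: Ov_iff_vc)
  note e2 = ramified_dyadic_e2[OF p2 d00 vd0 AB(3,4) N2]
  show "A2 / 2 \<in> Ov" using half e2(1) .
  have "vc (1 + 0) (A2 * A1)" using vc_mult[OF e2(1), of 0 A1] AB(1) by (simp add: Ov_iff_vc)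
  then have "A1 * A2 / 2 \<in> Ov" using half by (simp add: mult.commute)
  then have "A1 * A2 / 2 - (A1 * A2 / 2 - B1 * B2 / (2 * d0)) \<in> Ov" using O_diff Bil by blast
  then have "B1 * B2 / (2 * d0) \<in> Ov" by simp
  then have "vc 2 (B1 * B2)"
    by (rule vc_of_O_divide) (use two_nonzero d00 v2d in \<open>simp_all add: vclose_def\<close>)
  then have B12: "vc 2 B1" using vc_unit_factor e2(2) AB(4) by (auto simp: vclose_def vring_def)
  show "B1 / (2 * d0) \<in> Ov" using O_divide_vc[OF B12] two_nonzero d00 v2d by simp
  have "vc (2 + 2) (B1 * B1)" using vc_mult[OF B12 B12] .
  then have "B1\<^sup>2 / (4 * d0) \<in> Ov" using O_divide_vc[of 4 "B1\<^sup>2" "4 * d0"] four_nonzero d00 v4d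
    by (simp add: power2_eq_square)
  with N1 have "(A1\<^sup>2 / 4 - B1\<^sup>2 / (4 * d0) - 1 / 4) + B1\<^sup>2 / (4 * d0) \<in> Ov" by (rule O_add)
  then have "(A1\<^sup>2 - 1) / 4 \<in> Ov" by (simp add: diff_divide_distrib)
  then have A1sq: "vc 2 (A1\<^sup>2 - 1)"
    by (rule vc_of_O_divide) (use four_nonzero v4 in \<open>simp_all add: vclose_def\<close>)
  have A1u: "\<not> vc 1 A1"
  proof
    assume "vc 1 A1"
    then have "vc 1 (A1\<^sup>2)" using vc_mult[of 1 A1 1 A1] by (simp add: power2_eq_square vc_mono)
    from vc_diff[OF vc_mono[OF A1sq, of 1] this] show False by (simp add: vclose_def)
  qed
  show "(A1 - 1) / 2 \<in> Ov" "(A1 + 1) / 2 \<in> Ov"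
    using half dyadic_unit_congruences(1,2)[OF p2 AB(1) A1u] by simp_all
  show "(B2 - 1) / (2 * d0) \<in> Ov \<or> (B2 + 1) / (2 * d0) \<in> Ov"
    using dyadic_unit_congruences(4)[OF p2 AB(4) e2(2)] O_divide_vc two_nonzero d00 v2d
    by (metis mult_eq_0_iff order_refl)
qed

lemma disc_isometry_ramified_sign:
  assumes s: "s \<noteq> 0" and dd: "d = d0 * s\<^sup>2" and vd0: "v d0 = 1"
    and f: "disc_isometry d v LL f"
  defines "e1 \<equiv> (1/2 :: 'a, 0 :: 'a)" and "e2 \<equiv> (0 :: 'a, 1 / (2 * d0 * s))"
  shows "(f e1 - ksc 1 e1 \<in> LL \<and> f e2 - ksc 1 e2 \<in> LL) \<or>
    (f e1 - ksc (-1) e1 \<in> LL \<and> f e2 - ksc (-1) e2 \<in> LL)"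
proof -
  have d00: "d0 \<noteq> 0" using d_nonzero dd by auto
  note coords = OK_coords_ramified[OF s dd vd0]
  note dual = dual_lattice_coords[OF s dd coords]
  have e: "e1 \<in> DD" "e2 \<in> DD" using s d00 two_nonzero by (simp_all add: dual e1_def e2_def)
  define A1 where "A1 = 2 * fst (f e1)"
  define B1 where "B1 = 2 * d0 * s * snd (f e1)"
  define A2 where "A2 = 2 * fst (f e2)"
  define B2 where "B2 = 2 * d0 * s * snd (f e2)"
  have AB: "A1 \<in> Ov" "B1 \<in> Ov" "A2 \<in> Ov" "B2 \<in> Ov"
    using disc_isometry_dual[OF f e(1)] disc_isometry_dual[OF f e(2)]
    by (simp_all add: dual A1_def B1_def A2_def B2_def)
  have knorm_coords: "knorm d u = (2 * fst u)\<^sup>2 / 4 - (2 * d0 * s * snd u)\<^sup>2 / (4 * d0)" for u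
    using s d00 two_nonzero four_nonzero by (simp add: knorm_def dd power2_eq_square field_simps)
  have kbil_coords: "kbil d w u = (2 * fst w) * (2 * fst u) / 2
      - (2 * d0 * s * snd w) * (2 * d0 * s * snd u) / (2 * d0)" for w u
    using s d00 two_nonzero four_nonzero by (simp add: kbil_eq dd power2_eq_square field_simps)
  have ne1: "knorm d e1 = 1 / 4" and ne2: "knorm d e2 = - 1 / (4 * d0)"
    using s d00 two_nonzero four_nonzero by (simp_all add: knorm_def e1_def e2_def dd power2_eq_square field_simps)
  have N1: "A1\<^sup>2 / 4 - B1\<^sup>2 / (4 * d0) - 1 / 4 \<in> Ov"
    using disc_isometry_knorm[OF f e(1)] unfolding knorm_coords[of "f e1"] ne1
    by (simp add: A1_def B1_def)
  have N2: "A2\<^sup>2 / 4 - B2\<^sup>2 / (4 * d0) + 1 / (4 * d0) \<in> Ov"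
    using disc_isometry_knorm[OF f e(2)] unfolding knorm_coords[of "f e2"] ne2
    by (simp add: A2_def B2_def diff_divide_distrib)
  have Bil: "A1 * A2 / 2 - B1 * B2 / (2 * d0) \<in> Ov"
    using disc_isometry_kbil[OF f e] unfolding kbil_coords[of "f e1" "f e2"]
    by (simp add: kbil_eq e1_def e2_def A1_def B1_def A2_def B2_def)
  have diff_coords: "f e1 - ksc c e1 \<in> LL \<longleftrightarrow> (A1 - c) / 2 \<in> Ov \<and> B1 / (2 * d0) \<in> Ov"
    "f e2 - ksc c e2 \<in> LL \<longleftrightarrow> A2 / 2 \<in> Ov \<and> (B2 - c) / (2 * d0) \<in> Ov" for c
  proof -
    have "fst (f e1 - ksc c e1) = (A1 - c) / 2" "snd (f e1 - ksc c e1) * s = B1 / (2 * d0)"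
      "fst (f e2 - ksc c e2) = A2 / 2" "snd (f e2 - ksc c e2) * s = (B2 - c) / (2 * d0)"
      using s d00 two_nonzero
      by (simp_all add: e1_def e2_def ksc_def A1_def B1_def A2_def B2_def field_simps)
    then show "f e1 - ksc c e1 \<in> LL \<longleftrightarrow> (A1 - c) / 2 \<in> Ov \<and> B1 / (2 * d0) \<in> Ov"
      "f e2 - ksc c e2 \<in> LL \<longleftrightarrow> A2 / 2 \<in> Ov \<and> (B2 - c) / (2 * d0) \<in> Ov"
      by (simp_all only: coords)
  qed
  show ?thesis
  proof (cases "p = 2")
    case True
    show ?thesis
      using ramified_dyadic_signs[OF True d00 vd0 AB N1 N2 Bil] by (simp add: diff_coords)
  next
    case False
    have "e1 \<in> LL" using O_divide_unit[OF O_one two_nonzero v_two_eq_zero[OF False]] by (simp add: coords e1_def)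
    then have "f e1 - ksc c e1 \<in> LL" if "c \<in> Ov" for c
      using disc_isometry_OK[OF f] OK_diff OK_ksc that by blast
    then have "f e1 - ksc 1 e1 \<in> LL" "f e1 - ksc (-1) e1 \<in> LL" by simp_all
    moreover have "A2 / 2 \<in> Ov" using O_divide_unit[OF AB(3) two_nonzero v_two_eq_zero[OF False]] .
    ultimately show ?thesis
      using ramified_sign_odd[OF False d00 vd0 AB(3,4) N2] diff_coords(2)[of 1] diff_coords(2)[of "-1"]
      by auto
  qed
qed

lemma disc_isometry_lift_ramified:
  assumes s: "s \<noteq> 0" and dd: "d = d0 * s\<^sup>2" and vd0: "v d0 = 1"
    and f: "disc_isometry d v LL f"
  shows "\<exists>g\<in>SOlat d LL. \<forall>x\<in>DD. g x - f x \<in> LL"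
proof -
  have d00: "d0 \<noteq> 0" using d_nonzero dd by auto
  note dual = dual_lattice_coords[OF s dd OK_coords_ramified[OF s dd vd0]]
  define e1 where "e1 = (1/2 :: 'a, 0 :: 'a)"
  define e2 where "e2 = (0 :: 'a, 1 / (2 * d0 * s))"
  have e: "e1 \<in> DD" "e2 \<in> DD" using s d00 two_nonzero by (simp_all add: dual e1_def e2_def)
  have span: "\<exists>A B. A \<in> Ov \<and> B \<in> Ov \<and> x = ksc A e1 + ksc B e2" if "x \<in> DD" for x
    using that s d00 two_nonzero
    by (intro exI[of _ "2 * fst x"] exI[of _ "2 * d0 * s * snd x"])
      (simp add: dual e1_def e2_def ksc_def prod_eq_iff)
  have "ksc 1 = id" "ksc (-1) = uminus" by (auto simp: ksc_def)
  then show ?thesis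
    using disc_isometry_ramified_sign[OF s dd vd0 f] disc_isometry_lift_from_basis[OF f e span]
      id_in_SOlat uminus_in_SOlat
    unfolding e1_def e2_def by metis
qed

end


context quadratic_padic
begin

lemma dyadic_unit_square_congruence:
  assumes p2: "p = 2" and A: "A \<in> Ov" "\<not> vc 1 A" and B: "B \<in> Ov" "\<not> vc 1 B" and d0O: "d0 \<in> Ov"
  shows "vc 3 ((A\<^sup>2 - d0 * B\<^sup>2) - (1 - d0))"
proof -
  have "vc (0 + 3) (d0 * (B\<^sup>2 - 1))"
    using vc_mult[of 0 d0 3] d0O dyadic_unit_congruences(3)[OF p2 B] by (simp add: Ov_iff_vc)
  then have "vc 3 ((A\<^sup>2 - 1) - d0 * (B\<^sup>2 - 1))"
    using vc_diff dyadic_unit_congruences(3)[OF p2 A] by simp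
  moreover have "(A\<^sup>2 - 1) - d0 * (B\<^sup>2 - 1) = (A\<^sup>2 - d0 * B\<^sup>2) - (1 - d0)" by (simp add: algebra_simps)
  ultimately show ?thesis by simp
qed

lemma dyadic_unramified_norm_not_in_4O:
  assumes p2: "p = 2" and d00: "d0 \<noteq> 0" and vd0: "v d0 = 0" and nq: "\<not> vc 2 (d0 - 1)"
    and A: "A \<in> Ov" "\<not> vc 1 A" and X2: "vc 2 (A\<^sup>2 - d0 * B\<^sup>2)"
  shows False
proof -
  have d0O: "d0 \<in> Ov" using vd0 by (simp add: vring_def)
  have A0: "A \<noteq> 0" "v A = 0" using A by (auto simp: vclose_def vring_def)
  have BO: "B \<in> Ov"
  proof (rule ccontr)
    assume "B \<notin> Ov"
    then have B0: "B \<noteq> 0" and vB: "v B < 0" by (auto simp: vring_def)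
    have "v (A\<^sup>2) \<noteq> v (- (d0 * B\<^sup>2))" using A0 B0 d00 vd0 vB by (simp add: v_power2 v_mult)
    from v_add_neq[OF _ _ this] A0 B0 d00
    have "v (A\<^sup>2 - d0 * B\<^sup>2) = min (v (A\<^sup>2)) (v (- (d0 * B\<^sup>2)))" "A\<^sup>2 - d0 * B\<^sup>2 \<noteq> 0" by auto
    then show False using X2 vB B0 d00 vd0 by (simp add: vclose_def v_power2 v_mult)
  qed
  have Bu: "\<not> vc 1 B"
  proof
    assume "vc 1 B"
    then have "vc (0 + 2) (d0 * B\<^sup>2)"
      using vc_mult[of 0 d0 2 "B\<^sup>2"] d0O vc_sq_zero_iff[of 1 B] by (simp add: Ov_iff_vc)
    from vc_add[OF X2 this[simplified]] have "vc 2 (A\<^sup>2)" by simp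
    then show False using A0 by (simp add: vclose_def v_power2)
  qed
  have "vc 2 ((A\<^sup>2 - d0 * B\<^sup>2) - ((A\<^sup>2 - d0 * B\<^sup>2) - (1 - d0)))"
    using vc_diff[OF X2 vc_mono[OF dyadic_unit_square_congruence[OF p2 A BO Bu d0O]]] by simp
  then show False using nq by (simp add: vc_commute_diff)
qed

lemma O_of_norm_dyadic_unramified:
  assumes p2: "p = 2" and d00: "d0 \<noteq> 0" and vd0: "v d0 = 0" and nq: "\<not> vc 2 (d0 - 1)"
    and A: "2 * a \<in> Ov" and N: "a\<^sup>2 - d0 * b\<^sup>2 \<in> Ov"
  shows "a \<in> Ov \<and> b \<in> Ov"
proof -
  have aO: "a \<in> Ov"
  proof (rule ccontr)
    assume na: "a \<notin> Ov"
    have "\<not> vc 1 (2 * a)"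
    proof
      assume "vc 1 (2 * a)"
      then have "vc 0 (2 * a / 2)" using vc_half[OF p2, of 0 "2 * a"] by simp
      then show False using na two_nonzero by (simp add: Ov_iff_vc)
    qed
    moreover have "vc 2 ((2 * a)\<^sup>2 - d0 * (2 * b)\<^sup>2)"
    proof -
      have "vc 2 (4::'a)" using v_mult[of 2 2] two_nonzero v_two_eq_one[OF p2] by (simp add: vclose_def)
      moreover have "vc 0 (a\<^sup>2 - d0 * b\<^sup>2)" using N by (simp add: Ov_iff_vc)
      ultimately have "vc (2 + 0) (4 * (a\<^sup>2 - d0 * b\<^sup>2))" by (rule vc_mult)
      then show ?thesis by (simp add: power2_eq_square algebra_simps)
    qed
    ultimately show False using dyadic_unramified_norm_not_in_4O[OF p2 d00 vd0 nq A] by blast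
  qed
  moreover have "b \<in> Ov"
  proof (cases "b = 0")
    case False
    have "d0 * b\<^sup>2 = a\<^sup>2 - (a\<^sup>2 - d0 * b\<^sup>2)" by simp
    then have "d0 * b\<^sup>2 \<in> Ov" using aO N O_diff O_power by metis
    then show ?thesis using False d00 vd0 by (simp add: vring_def v_mult v_power2)
  qed simp
  ultimately show ?thesis by simp
qed

lemma OK_coords_dyadic_unramified:
  assumes p2: "p = 2" and s: "s \<noteq> 0" and dd: "d = d0 * s\<^sup>2" and vd0: "v d0 = 0"
    and nq: "\<not> vc 2 (d0 - 1)"
  shows "z \<in> LL \<longleftrightarrow> fst z \<in> Ov \<and> snd z * s \<in> Ov"
proof -
  have d00: "d0 \<noteq> 0" using d_nonzero dd by auto
  have d0O: "d0 \<in> Ov" using vd0 by (simp add: vring_def)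
  have kn: "knorm d z = (fst z)\<^sup>2 - d0 * (snd z * s)\<^sup>2"
    by (simp add: knorm_def dd power2_eq_square algebra_simps)
  show ?thesis
    using O_of_norm_dyadic_unramified[OF p2 d00 vd0 nq] d0O unfolding OK_iff_trace_norm kn
    by (metis O_mult O_numeral O_diff O_power)
qed

lemma dyadic_unramified_classes:
  assumes p2: "p = 2" and d00: "d0 \<noteq> 0" and vd0: "v d0 = 0"
    and A: "A \<in> Ov" and B: "B \<in> Ov" and c: "vc 2 (A\<^sup>2 - d0 * B\<^sup>2 - 1)"
  shows "(vc 1 (A - 1) \<and> vc 1 B) \<or> (vc 1 A \<and> vc 1 (B - 1))"
proof -
  have d0O: "d0 \<in> Ov" "\<not> vc 1 d0" using vd0 d00 by (simp_all add: vring_def vclose_def)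
  have c1: "vc 1 (A\<^sup>2 - d0 * B\<^sup>2 - 1)" using vc_mono[OF c] by simp
  consider "vc 1 A" "vc 1 B" | "vc 1 A" "\<not> vc 1 B" | "\<not> vc 1 A" "vc 1 B" | "\<not> vc 1 A" "\<not> vc 1 B"
    by blast
  then show ?thesis
  proof cases
    case 1
    have A2: "vc 1 (A\<^sup>2)" using vc_mult[OF 1(1) 1(1)] vc_mono by (simp add: power2_eq_square)
    have "vc (0 + 2) (d0 * B\<^sup>2)"
      using vc_mult[of 0 d0 2 "B\<^sup>2"] d0O vc_sq_zero_iff[of 1 B] 1(2) by (simp add: Ov_iff_vc)
    then have "vc 1 (d0 * B\<^sup>2)" using vc_mono by simp
    with A2 have "vc 1 ((A\<^sup>2 - d0 * B\<^sup>2) - (A\<^sup>2 - d0 * B\<^sup>2 - 1))" using vc_diff c1 by blast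
    then show ?thesis by (simp add: vclose_def)
  next
    case 2
    then show ?thesis using dyadic_unit_congruences(1)[OF p2 B] by simp
  next
    case 3
    then show ?thesis using dyadic_unit_congruences(1)[OF p2 A] by simp
  next
    case 4
    have "vc 1 ((A\<^sup>2 - d0 * B\<^sup>2 - 1) - ((A\<^sup>2 - d0 * B\<^sup>2) - (1 - d0)))"
      using vc_diff[OF c1 vc_mono[OF dyadic_unit_square_congruence[OF p2 A 4(1) B 4(2) d0O(1)]]]
      by simp
    then show ?thesis using d0O by simp
  qed
qed

lemma dyadic_unramified_d0_congruences:
  assumes p2: "p = 2" and d00: "d0 \<noteq> 0" and vd0: "v d0 = 0" and nq: "\<not> vc 2 (d0 - 1)"
  shows "vc 2 (d0 + 1)" "1 - d0 \<noteq> 0" "v (1 - d0) = 1"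
proof -
  have d0O: "d0 \<in> Ov" "\<not> vc 1 d0" using vd0 d00 by (simp_all add: vring_def vclose_def)
  note congr = dyadic_unit_congruences[OF p2 d0O]
  show "vc 2 (d0 + 1)" using congr(4) nq by simp
  show "1 - d0 \<noteq> 0" using nq by auto
  then have "v (d0 - 1) = 1" using congr(1) nq by (simp add: vclose_def)
  then show "v (1 - d0) = 1" by (metis minus_diff_eq v_uminus)
qed

text \<open>Multiplication by the norm-one element \<open>(1 + d\<^sub>0 + 2\<surd>d\<^sub>0) / (1 - d\<^sub>0)\<close>, the square of
  \<open>(1 + \<surd>d\<^sub>0)\<close> divided by its norm, exchanges \<open>e\<^sub>1 = 1/2\<close> and \<open>e\<^sub>2 = \<surd>d\<^sub>0 / 2\<close> modulo \<open>\<O>\<^sub>K\<close>.\<close>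

lemma exists_swap_isometry:
  assumes p2: "p = 2" and s: "s \<noteq> 0" and dd: "d = d0 * s\<^sup>2" and vd0: "v d0 = 0"
    and nq: "\<not> vc 2 (d0 - 1)"
  defines "e1 \<equiv> (1/2 :: 'a, 0 :: 'a)" and "e2 \<equiv> (0 :: 'a, 1 / (2 * s))"
  shows "\<exists>g\<in>SOlat d LL. g e1 - e2 \<in> LL \<and> g e2 - e1 \<in> LL"
proof -
  have d00: "d0 \<noteq> 0" using d_nonzero dd by auto
  have d0O: "d0 \<in> Ov" using vd0 by (simp add: vring_def)
  note coords = OK_coords_dyadic_unramified[OF p2 s dd vd0 nq]
  note d0 = dyadic_unramified_d0_congruences[OF p2 d00 vd0 nq]
  have v2: "v 2 = 1" using v_two_eq_one[OF p2] .
  have vc12: "vc 1 (2::'a)" using v2 by (simp add: vclose_def)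
  define a0 where "a0 = (1 + d0) / (1 - d0)"
  define b0 where "b0 = 2 / (1 - d0)"
  define \<alpha> where "\<alpha> = (a0, b0 / s)"
  have a0O: "a0 \<in> Ov" unfolding a0_def using O_divide_vc[of 2 "1 + d0" "1 - d0"] d0
    by (simp add: add.commute)
  have b0O: "b0 \<in> Ov" unfolding b0_def using O_divide_vc[OF vc12] d0 by simp
  have "knorm d \<alpha> = a0\<^sup>2 - d0 * b0\<^sup>2"
    using s by (simp add: knorm_def \<alpha>_def dd power_divide)
  also have "\<dots> = ((1 + d0)\<^sup>2 - d0 * 2\<^sup>2) / (1 - d0)\<^sup>2"
    by (simp add: a0_def b0_def power_divide diff_divide_distrib)
  also have "(1 + d0)\<^sup>2 - d0 * 2\<^sup>2 = (1 - d0)\<^sup>2" by (simp add: power2_eq_square algebra_simps)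
  finally have n\<alpha>: "knorm d \<alpha> = 1" using d0 by simp
  have mul: "fst (kmul d \<alpha> x) = a0 * fst x + d0 * b0 * (snd x * s)"
    "snd (kmul d \<alpha> x) * s = a0 * (snd x * s) + b0 * fst x"
    "fst (kmul d (kconj \<alpha>) x) = a0 * fst x - d0 * b0 * (snd x * s)"
    "snd (kmul d (kconj \<alpha>) x) * s = a0 * (snd x * s) - b0 * fst x" for x
    using s by (simp_all add: kmul_def kconj_def \<alpha>_def dd power2_eq_square field_simps)
  have "kmul d \<alpha> ` LL = LL"
  proof (rule kmul_image_eq[OF n\<alpha>])
    fix x assume "x \<in> LL"
    then have x: "fst x \<in> Ov" "snd x * s \<in> Ov" using coords by auto
    show "kmul d \<alpha> x \<in> LL" "kmul d (kconj \<alpha>) x \<in> LL"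
      unfolding coords mul using x a0O b0O d0O by (auto intro!: O_add O_diff O_mult)
  qed
  then have g: "kmul d \<alpha> \<in> SOlat d LL" using kmul_in_SOV[OF n\<alpha>] by (simp add: SOlat_def)
  define w0 where "w0 = (1 + d0) / (2 * (1 - d0))"
  have v2m: "v (2 * (1 - d0)) = 2" using v_mult[of 2 "1 - d0"] two_nonzero d0 v2 by simp
  have w0O: "w0 \<in> Ov" unfolding w0_def using O_divide_vc[of 2 "1 + d0" "2 * (1 - d0)"] d0 two_nonzero v2m
    by (simp add: add.commute)
  have "vc 2 (3 * (d0 + 1))" using vc_mult[of 0 3 2 "d0 + 1"] d0(1) by (simp add: Ov_iff_vc[symmetric])
  moreover have "vc 2 (2 * 2 :: 'a)" using vc_mult[OF vc12 vc12] by simp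
  ultimately have "vc 2 (3 * (d0 + 1) - 2 * 2)" by (rule vc_diff)
  moreover have "3 * (d0 + 1) - 2 * 2 = 3 * d0 - 1" by (simp add: algebra_simps)
  ultimately have "vc 2 (3 * d0 - 1)" by simp
  then have w1O: "(3 * d0 - 1) / (2 * (1 - d0)) \<in> Ov"
    using O_divide_vc[of 2 "3 * d0 - 1" "2 * (1 - d0)"] d0 two_nonzero v2m by simp
  have "fst (kmul d \<alpha> e1 - e2) = w0" "snd (kmul d \<alpha> e1 - e2) * s = w0"
    using s two_nonzero d0(2)
    by (simp_all add: kmul_def \<alpha>_def e1_def e2_def a0_def b0_def w0_def field_simps)
  moreover have "fst (kmul d \<alpha> e2 - e1) = (3 * d0 - 1) / (2 * (1 - d0))"
    "snd (kmul d \<alpha> e2 - e1) * s = w0"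
    using s two_nonzero d0(2)
    by (simp_all add: kmul_def \<alpha>_def e1_def e2_def a0_def b0_def w0_def dd power2_eq_square field_simps)
  ultimately
  have "kmul d \<alpha> e1 - e2 \<in> LL" "kmul d \<alpha> e2 - e1 \<in> LL" using coords w0O w1O by simp_all
  then show ?thesis using g by blast
qed

end


context quadratic_padic
begin

lemma dyadic_unramified_dual_classes:
  assumes p2: "p = 2" and s: "s \<noteq> 0" and dd: "d = d0 * s\<^sup>2" and vd0: "v d0 = 0"
    and nq: "\<not> vc 2 (d0 - 1)" and u: "u \<in> DD"
    and N: "vc 2 ((2 * fst u)\<^sup>2 - d0 * (2 * s * snd u)\<^sup>2 - 1)"
  shows "u - (1/2, 0) \<in> LL \<or> u - (0, 1 / (2 * s)) \<in> LL"
proof -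
  have d00: "d0 \<noteq> 0" using d_nonzero dd by auto
  note coords = OK_coords_dyadic_unramified[OF p2 s dd vd0 nq]
  have A: "2 * fst u \<in> Ov" and "2 * d0 * s * snd u \<in> Ov"
    using u by (simp_all add: dual_lattice_coords[OF s dd coords])
  moreover have "2 * s * snd u = 2 * d0 * s * snd u / d0" using d00 by simp
  ultimately have AB: "2 * fst u \<in> Ov" "2 * s * snd u \<in> Ov"
    using O_divide_unit[OF _ d00 vd0] by metis+
  have "fst (u - (1/2, 0)) = (2 * fst u - 1) / 2" "snd (u - (1/2, 0)) * s = (2 * s * snd u) / 2"
    "fst (u - (0, 1 / (2 * s))) = (2 * fst u) / 2" "snd (u - (0, 1 / (2 * s))) * s = (2 * s * snd u - 1) / 2"
    using s two_nonzero by (simp_all add: field_simps)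
  then have "u - (1/2, 0) \<in> LL \<longleftrightarrow> (2 * fst u - 1) / 2 \<in> Ov \<and> (2 * s * snd u) / 2 \<in> Ov"
    "u - (0, 1 / (2 * s)) \<in> LL \<longleftrightarrow> (2 * fst u) / 2 \<in> Ov \<and> (2 * s * snd u - 1) / 2 \<in> Ov"
    by (simp_all only: coords)
  moreover have "y / 2 \<in> Ov" if "vc 1 y" for y using vc_half[OF p2, of 0 y] that by (simp add: Ov_iff_vc)
  ultimately show ?thesis
    using dyadic_unramified_classes[OF p2 d00 vd0 AB N] by blast
qed

lemma disc_isometry_dyadic_unramified_cases:
  assumes p2: "p = 2" and s: "s \<noteq> 0" and dd: "d = d0 * s\<^sup>2" and vd0: "v d0 = 0"
    and nq: "\<not> vc 2 (d0 - 1)" and f: "disc_isometry d v LL f"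
  defines "e1 \<equiv> (1/2 :: 'a, 0 :: 'a)" and "e2 \<equiv> (0 :: 'a, 1 / (2 * s))"
  shows "(f e1 - e1 \<in> LL \<and> f e2 - e2 \<in> LL) \<or> (f e1 - e2 \<in> LL \<and> f e2 - e1 \<in> LL)"
proof -
  have d00: "d0 \<noteq> 0" using d_nonzero dd by auto
  have d0O: "d0 \<in> Ov" using vd0 by (simp add: vring_def)
  note coords = OK_coords_dyadic_unramified[OF p2 s dd vd0 nq]
  note classes = dyadic_unramified_dual_classes[OF p2 s dd vd0 nq]
  have e: "e1 \<in> DD" "e2 \<in> DD"
    using s two_nonzero d0O by (simp_all add: dual_lattice_coords[OF s dd coords] e1_def e2_def)
  have vc24: "vc 2 (4::'a)" using v_mult[of 2 2] two_nonzero v_two_eq_one[OF p2] by (simp add: vclose_def)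
  have knorm_coords: "knorm d u = ((2 * fst u)\<^sup>2 - d0 * (2 * s * snd u)\<^sup>2) / 4" for u
    using s two_nonzero four_nonzero by (simp add: knorm_def dd power2_eq_square field_simps)
  have ne1: "knorm d e1 = 1 / 4" and ne2: "knorm d e2 = - d0 / 4"
    using s two_nonzero four_nonzero by (simp_all add: knorm_def e1_def e2_def dd power2_eq_square field_simps)
  have "vc 2 ((2 * fst (f e1))\<^sup>2 - d0 * (2 * s * snd (f e1))\<^sup>2 - 1)"
  proof (rule vc_of_O_divide[OF _ four_nonzero vc24])
    have "((2 * fst (f e1))\<^sup>2 - d0 * (2 * s * snd (f e1))\<^sup>2 - 1) / 4 = knorm d (f e1) - knorm d e1"
      by (simp add: knorm_coords[of "f e1"] ne1 diff_divide_distrib)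
    then show "((2 * fst (f e1))\<^sup>2 - d0 * (2 * s * snd (f e1))\<^sup>2 - 1) / 4 \<in> Ov"
      using disc_isometry_knorm[OF f e(1)] by (simp only:)
  qed
  then have r1: "f e1 - e1 \<in> LL \<or> f e1 - e2 \<in> LL"
    using classes[OF disc_isometry_dual[OF f e(1)]] by (simp only: e1_def e2_def)
  have "vc 2 (((2 * fst (f e2))\<^sup>2 - d0 * (2 * s * snd (f e2))\<^sup>2 - 1) + (d0 + 1))"
  proof (rule vc_of_O_divide[OF _ four_nonzero vc24])
    have "(((2 * fst (f e2))\<^sup>2 - d0 * (2 * s * snd (f e2))\<^sup>2 - 1) + (d0 + 1)) / 4
        = knorm d (f e2) - knorm d e2"
      using four_nonzero by (simp add: knorm_coords[of "f e2"] ne2 field_simps)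
    then show "(((2 * fst (f e2))\<^sup>2 - d0 * (2 * s * snd (f e2))\<^sup>2 - 1) + (d0 + 1)) / 4 \<in> Ov"
      using disc_isometry_knorm[OF f e(2)] by (simp only:)
  qed
  from vc_diff[OF this dyadic_unramified_d0_congruences(1)[OF p2 d00 vd0 nq]]
  have "vc 2 ((2 * fst (f e2))\<^sup>2 - d0 * (2 * s * snd (f e2))\<^sup>2 - 1)" by (simp only: add_diff_cancel)
  then have r2: "f e2 - e1 \<in> LL \<or> f e2 - e2 \<in> LL"
    using classes[OF disc_isometry_dual[OF f e(2)]] by (simp only: e1_def e2_def)
  have "e1 - e2 \<notin> LL"
    using two_nonzero v_divide[of 1 2] v_two_eq_one[OF p2] by (simp add: coords e1_def e2_def vring_def)
  then have distinct: "\<not> (f e1 - e \<in> LL \<and> f e2 - e \<in> LL)" for e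
    using OK_diff[of "f e1 - e" "f e2 - e"] disc_isometry_inj[OF f e] by auto
  show ?thesis using r1 r2 distinct[of e1] distinct[of e2] by auto
qed

lemma disc_isometry_lift_dyadic_unramified:
  assumes p2: "p = 2" and s: "s \<noteq> 0" and dd: "d = d0 * s\<^sup>2" and vd0: "v d0 = 0"
    and nq: "\<not> vc 2 (d0 - 1)" and f: "disc_isometry d v LL f"
  shows "\<exists>g\<in>SOlat d LL. \<forall>x\<in>DD. g x - f x \<in> LL"
proof -
  have d00: "d0 \<noteq> 0" using d_nonzero dd by auto
  have d0O: "d0 \<in> Ov" using vd0 by (simp add: vring_def)
  note dual = dual_lattice_coords[OF s dd OK_coords_dyadic_unramified[OF p2 s dd vd0 nq]]
  define e1 where "e1 = (1/2 :: 'a, 0 :: 'a)"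
  define e2 where "e2 = (0 :: 'a, 1 / (2 * s))"
  have e: "e1 \<in> DD" "e2 \<in> DD" using s two_nonzero d0O by (simp_all add: dual e1_def e2_def)
  have span: "\<exists>A B. A \<in> Ov \<and> B \<in> Ov \<and> x = ksc A e1 + ksc B e2" if x: "x \<in> DD" for x
  proof (intro exI conjI)
    show "2 * fst x \<in> Ov" using x by (simp add: dual)
    have "2 * s * snd x = 2 * d0 * s * snd x / d0" using d00 by simp
    then show "2 * s * snd x \<in> Ov"
      using x O_divide_unit[OF _ d00 vd0] by (metis dual)
    show "x = ksc (2 * fst x) e1 + ksc (2 * s * snd x) e2"
      using s two_nonzero by (simp add: e1_def e2_def ksc_def prod_eq_iff)
  qed
  from disc_isometry_dyadic_unramified_cases[OF p2 s dd vd0 nq f]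
  show ?thesis unfolding e1_def[symmetric] e2_def[symmetric]
  proof
    assume "f e1 - e1 \<in> LL \<and> f e2 - e2 \<in> LL"
    then show ?thesis using disc_isometry_lift_from_basis[OF f e span id_in_SOlat] by simp
  next
    assume h: "f e1 - e2 \<in> LL \<and> f e2 - e1 \<in> LL"
    obtain g where g: "g \<in> SOlat d LL" "g e1 - e2 \<in> LL" "g e2 - e1 \<in> LL"
      using exists_swap_isometry[OF p2 s dd vd0 nq] unfolding e1_def e2_def by blast
    have "f e1 - g e1 \<in> LL" "f e2 - g e2 \<in> LL"
      using OK_diff[of "f e1 - e2" "g e1 - e2"] OK_diff[of "f e2 - e1" "g e2 - e1"] h g by simp_all
    then show ?thesis using disc_isometry_lift_from_basis[OF f e span g(1)] by blast
  qed
qed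

text \<open>The three cases are exhaustive because \<open>d\<^sub>0 \<equiv> 1 mod 4\<close> holds automatically for a
  unit \<open>d\<^sub>0\<close> when \<open>p\<close> is odd.\<close>

lemma disc_isometry_lift:
  assumes f: "disc_isometry d v LL f"
  shows "\<exists>g\<in>SOlat d LL. \<forall>x\<in>DD. g x - f x \<in> LL"
proof -
  obtain s where s: "s \<noteq> 0" "v s = v d div 2" using v_surj by blast
  define d0 where "d0 = d / s\<^sup>2"
  have dd: "d = d0 * s\<^sup>2" using s by (simp add: d0_def)
  have "v d0 = v d mod 2" using s d_nonzero
    by (simp add: d0_def v_divide v_power2) (simp add: minus_div_mult_eq_mod[symmetric] mult.commute)
  then have "v d0 = 1 \<or> v d0 = 0" by presburger
  then consider "v d0 = 1" | "v d0 = 0" "(d0 - 1) / 4 \<in> Ov" | "v d0 = 0" "(d0 - 1) / 4 \<notin> Ov"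
    by blast
  then show ?thesis
  proof cases
    case 1
    show ?thesis using disc_isometry_lift_ramified[OF s(1) dd 1 f] .
  next
    case 2
    show ?thesis using disc_isometry_lift_if_dual_eq[OF f dual_subset_OK_if_1mod4[OF s(1) dd 2]] .
  next
    case 3
    have d00: "d0 \<noteq> 0" using d_nonzero dd by auto
    have "d0 - 1 \<in> Ov" using 3 d00 O_diff[of d0 1] by (simp add: vring_def)
    have p2: "p = 2"
    proof (rule ccontr)
      assume "p \<noteq> 2"
      then have "v (4::'a) = 0" using v_mult[of 2 2] two_nonzero v_two_eq_zero by simp
      then show False using O_divide_unit[OF \<open>d0 - 1 \<in> Ov\<close> four_nonzero] 3 by blast
    qed
    have "\<not> vc 2 (d0 - 1)"
    proof
      assume "vc 2 (d0 - 1)"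
      moreover have "v (4::'a) = 2" using v_mult[of 2 2] two_nonzero v_two_eq_one[OF p2] by simp
      ultimately show False using O_divide_vc[of 2 "d0 - 1" 4] four_nonzero 3 by simp
    qed
    then show ?thesis using disc_isometry_lift_dyadic_unramified[OF p2 s(1) dd 3(1) _ f] by blast
  qed
qed

end

theorem lemma2p3:
  fixes v :: "'a::field \<Rightarrow> int" and d :: 'a
  assumes F: "nonarch_local_field v"
    and char: "(2::'a) \<noteq> 0"
    and d: "d \<noteq> 0"
  shows "spinor_norms d (Olat d (OK d v)) = spinor_norms d (SOlat d (OK d v)) \<and>
    ((\<nexists>t. d = t ^ 2) \<longrightarrow>
       spinor_norms d (Olat d (OK d v)) = {knorm d z | z. knorm d z \<noteq> 0}) \<and>
    ((\<exists>t. d = t ^ 2) \<longrightarrow>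
       spinor_norms d (Olat d (OK d v)) = {u * t ^ 2 | u t. u \<in> vunits v \<and> t \<noteq> 0}) \<and>
    (\<forall>p::nat. prime p \<and> (\<forall>n::nat. n > 0 \<longrightarrow> (of_nat n :: 'a) \<noteq> 0) \<and>
        v (of_nat p) = 1 \<and> card (residue_classes v) = p \<longrightarrow>
      (\<forall>f. disc_isometry d v (OK d v) f \<longrightarrow>
         (\<exists>g\<in>SOlat d (OK d v). \<forall>x\<in>dual_lattice d v (OK d v). g x - f x \<in> OK d v)))"
proof -
  have local: "quadratic_local v d"
    using F char d unfolding nonarch_local_field_def quadratic_local_def quadratic_local_axioms_def
      valued_field_def by blast
  interpret quadratic_local v d by (rule local)
  have "\<forall>p::nat. prime p \<and> (\<forall>n::nat. n > 0 \<longrightarrow> (of_nat n :: 'a) \<noteq> 0) \<and>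
        v (of_nat p) = 1 \<and> card (residue_classes v) = p \<longrightarrow>
      (\<forall>f. disc_isometry d v (OK d v) f \<longrightarrow>
         (\<exists>g\<in>SOlat d (OK d v). \<forall>x\<in>dual_lattice d v (OK d v). g x - f x \<in> OK d v))"
  proof (intro allI impI)
    fix p :: nat and f
    assume "prime p \<and> (\<forall>n::nat. n > 0 \<longrightarrow> (of_nat n :: 'a) \<noteq> 0) \<and>
        v (of_nat p) = 1 \<and> card (residue_classes v) = p"
    then interpret quadratic_padic v d p
      using local unfolding quadratic_padic_def quadratic_padic_axioms_def by blast
    show "disc_isometry d v LL f \<Longrightarrow> \<exists>g\<in>SOlat d LL. \<forall>x\<in>DD. g x - f x \<in> LL"
      by (rule disc_isometry_lift)
  qed
  then show ?thesis using spinor_norms_OK by blast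
qed

end
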